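(* Let $\tau$ be a state on the $Q$-MCR algebra $\mathbb A$ satisfying the continuity assumption in the context. Then: (i) The functionals $\mathbf S^{(m,n)}(\varphi_1\otimes g_1,\dots,\varphi_{m+n}\otimes g_{m+n}):=\tau\big(A^+(\varphi_1\otimes g_1)\cdots A^+(\varphi_m\otimes g_m)A^-(\varphi_{m+1}\otimes g_{m+1})\cdots A^-(\varphi_{m+n}\otimes g_{m+n})\big)$, for $m,n\ge0$, $m+n\ge1$, $\varphi_i\in C_0(Y;V)$, $g_i\in\mathcal G$, uniquely determine $\tau$. (ii) The functionals $\mathbf M^{(n)}(\varphi_1\otimes g_1,\dots,\varphi_n\otimes g_n):=\tau\big(B(\varphi_1\otimes g_1)\cdots B(\varphi_n\otimes g_n)\big)$, for $n\ge1$, $\varphi_i\in C_0(Y;V_{\mathbb R})$, $g_i\in\mathcal G$, uniquely determine $\tau$, where $V_{\mathbb R}:=\mathbb R^r\subset\mathbb C^r=V$. (Here "uniquely determine" means: two states satisfying the continuity assumption with the same functionals coincide.)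
   Context: Setting: $d\ge2$, $X=\mathbb R^d\ni x=(y,z)$, $y\in Y:=\mathbb R$, $z\in Z:=\mathbb R^{d-1}$; $V=\mathbb C^r$, standard basis $e_i$, $J$ complex conjugation, $\langle u,v\rangle=(u,Jv)$. $Q:Y^2\to\mathcal L(V^{\otimes2})$ continuous, unitary-valued, $Q(y_1,y_2)^*=Q(y_2,y_1)$, satisfying the functional Yang–Baxter equation $Q_1(y_1,y_2)Q_2(y_1,y_3)Q_1(y_2,y_3)=Q_2(y_2,y_3)Q_1(y_1,y_3)Q_2(y_1,y_2)$ ($C_i$ = $C$ acting on factors $i,i+1$). $Q(x_1,x_2):=Q(y_1,y_2)$, $\mathbb S^{(n)}(v_1\otimes\cdots\otimes v_n)=Jv_n\otimes\cdots\otimes Jv_1$, $\widehat Q(x_1,x_2)=\mathbb S^{(2)}Q(x_2,x_1)\mathbb S^{(2)}$, $\langle\widetilde Q(x_1,x_2)e_i\otimes e_j,e_k\otimes e_l\rangle=\langle Q(x_1,x_2)e_k\otimes e_i,e_l\otimes e_j\rangle$, $\operatorname{Tr}(v)=\sum_k(v,e_k\otimes e_k)$, $\operatorname{Tr}_i$ on factors $i,i+1$. $\mathcal G=L^2(Z)$, $\mathfrak F^{(n)}$ = span of $\varphi(y_1..y_n)g_1(z_1)\cdots g_n(z_n)$, $\varphi\in C_0(Y^n;V^{\otimes n})$, $g_i\in\mathcal G$. $\mathbb A$ (the $Q$-MCR algebra) is the unital $*$-algebra spanned by $\mathbf 1$ and $\Phi(f^{(n)};\sharp_1..\sharp_n)$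 ($f^{(n)}\in\mathfrak F^{(n)}$, linear in $f^{(n)}$), with product by tensoring kernels and concatenating signs, involution $\Phi(f;\sharp_1..\sharp_n)^*=\Phi(\mathbb S^{(n)}f(x_n..x_1);-\sharp_n..-\sharp_1)$, and relations: $\sharp_i=\sharp_{i+1}=+$: $\Phi(f;\sharp)=\Phi(Q_i(x_i,x_{i+1})f(..,x_{i+1},x_i,..);\sharp)$; $\sharp_i=\sharp_{i+1}=-$: same with $\widehat Q_i(x_i,x_{i+1})$; $\sharp_i=-,\sharp_{i+1}=+$: $\Phi(f;\sharp)=\Phi(\widetilde Q_i(x_{i+1},x_i)f(..,x_{i+1},x_i,..);\sharp\text{ with }\sharp_i,\sharp_{i+1}\text{ swapped})+\Phi(g;\sharp\text{ with }\sharp_i,\sharp_{i+1}\text{ removed})$, $g(x_1..x_{n-2})=\int_X\operatorname{Tr}_if(x_1,..,x_{i-1},x,x,x_i,..,x_{n-2})dx$. For $f\in\mathfrak F^{(1)}$: $A^\sharp(f):=\Phi(f;\sharp)$, $B(f):=A^+(f)+A^-(Jf)$; $(\varphi\otimes g)(x):=\varphi(y)g(z)$. A state is a linear $\tau:\mathbb A\to\mathbb C$ with $\tau(\mathbf 1)=1$, $\tau(a^*a)\ge0$. Continuity assumption: $C_0(Y^n;V^{\otimes n})$ carries the topology in which $f_k\to f$ iff all supports lie in a common compact set and convergence is uniform; for all signs $\sharp_1..\sharp_n$ and fixed $g_1..g_n\in\mathcal G$, the functional $\varphi\mapsto\tau\big(\Phi(\varphi(y_1..y_n)g_1(z_1)\cdots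 g_n(z_n);\sharp_1..\sharp_n)\big)$ is continuous on $C_0(Y^n;V^{\otimes n})$. *)

theory Defs
  imports "HOL-Analysis.Analysis"
begin

text \<open>Points x = (y,z) of X = Y \<times> Z with Y = real and Z a Euclidean space of
dimension d-1 \<ge> 1 (the type variable 'z).  A vector of V^{\<otimes>n}, V = C^r, is given by
its components, indexed by multi-indices (lists of length n with entries < r).
A kernel f : X^n \<rightarrow> V^{\<otimes>n} is a function of a list of n points and a multi-index.
A 2-site operator (element of L(V^{\<otimes>2})) is given by its matrix entries M i j k l,
i.e. (M v)_{ij} = sum_{k,l} M i j k l * v_{kl}.\<close>

type_synonym vec = "nat list \<Rightarrow> complex"
type_synonym op2 = "nat \<Rightarrow> nat \<Rightarrow> nat \<Rightarrow> nat \<Rightarrow> complex"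
type_synonym 'z kernel = "(real \<times> 'z) list \<Rightarrow> vec"
type_synonym 'z mterm = "bool list \<times> 'z kernel"
  (* signs: True = +, False = - ; the term Phi(f; signs) *)

definition mi :: "nat \<Rightarrow> nat \<Rightarrow> nat list \<Rightarrow> bool" where
  "mi r n is \<longleftrightarrow> length is = n \<and> (\<forall>k\<in>set is. k < r)"

text \<open>C_0(Y^n; V^{\<otimes>n}) (continuous, compactly supported).  Continuity on R^n is
expressed through the coordinate map from the product space nat \<Rightarrow> real.\<close>
definition Cc :: "nat \<Rightarrow> nat \<Rightarrow> (real list \<Rightarrow> vec) \<Rightarrow> bool" where
  "Cc r n \<phi> \<longleftrightarrow> (\<forall>is. mi r n is \<longrightarrow>
      continuous_on UNIV (\<lambda>v::nat \<Rightarrow> real. \<phi> (map v [0..<n]) is) \<and>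
      (\<exists>C. \<forall>ys. length ys = n \<longrightarrow> (\<exists>y\<in>set ys. C < \<bar>y\<bar>) \<longrightarrow> \<phi> ys is = 0))"

definition Cc1 :: "nat \<Rightarrow> (real \<Rightarrow> nat \<Rightarrow> complex) \<Rightarrow> bool" where
  "Cc1 r \<phi> \<longleftrightarrow> (\<forall>k<r. continuous_on UNIV (\<lambda>y. \<phi> y k) \<and>
      (\<exists>C. \<forall>y. C < \<bar>y\<bar> \<longrightarrow> \<phi> y k = 0))"

definition Cc1_real :: "nat \<Rightarrow> (real \<Rightarrow> nat \<Rightarrow> complex) \<Rightarrow> bool" where
  "Cc1_real r \<phi> \<longleftrightarrow> Cc1 r \<phi> \<and> (\<forall>y. \<forall>k<r. Im (\<phi> y k) = 0)"

text \<open>G = L^2(Z) (square integrable functions; classes are handled by the a.e.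
invariance required of states below).\<close>
definition L2 :: "('z::euclidean_space \<Rightarrow> complex) \<Rightarrow> bool" where
  "L2 g \<longleftrightarrow> g \<in> borel_measurable lborel \<and> integrable lborel (\<lambda>z. (cmod (g z))\<^sup>2)"

definition prodker :: "(real list \<Rightarrow> vec) \<Rightarrow> ('z \<Rightarrow> complex) list \<Rightarrow> 'z kernel" where
  "prodker \<phi> gs = (\<lambda>xs is. \<phi> (map fst xs) is * (\<Prod>k<length gs. (gs ! k) (snd (xs ! k))))"

definition Fsp :: "nat \<Rightarrow> nat \<Rightarrow> ('z::euclidean_space) kernel set" where
  "Fsp r n = {f. \<exists>ps. (\<forall>p\<in>set ps. Cc r n (fst p) \<and> length (snd p) = n \<and> (\<forall>g\<in>set (snd p). L2 g))
                  \<and> f = (\<lambda>xs is. \<Sum>p\<leftarrow>ps. prodker (fst p) (snd p) xs is)}"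

definition ker1 :: "(real \<Rightarrow> nat \<Rightarrow> complex) \<Rightarrow> ('z \<Rightarrow> complex) \<Rightarrow> 'z kernel" where
  "ker1 \<phi> g = (\<lambda>xs is. \<phi> (fst (xs ! 0)) (is ! 0) * g (snd (xs ! 0)))"

text \<open>Operator with entries M acting on sites i, i+1 (0-indexed) of V^{\<otimes>n}.\<close>
definition op_at :: "nat \<Rightarrow> nat \<Rightarrow> op2 \<Rightarrow> vec \<Rightarrow> vec" where
  "op_at r i M v = (\<lambda>is. \<Sum>k<r. \<Sum>l<r. M (is ! i) (is ! Suc i) k l * v (is[i := k, Suc i := l]))"

definition lswap :: "nat \<Rightarrow> 'a list \<Rightarrow> 'a list" where
  "lswap i xs = xs[i := xs ! Suc i, Suc i := xs ! i]"

text \<open>S^{(n)}(v_1 \<otimes> ... \<otimes> v_n) = J v_n \<otimes> ... \<otimes> J v_1\<close>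
definition Sflip :: "vec \<Rightarrow> vec" where
  "Sflip v = (\<lambda>is. cnj (v (rev is)))"

definition ent :: "(vec \<Rightarrow> vec) \<Rightarrow> op2" where
  "ent A = (\<lambda>i j k l. A (\<lambda>is. if is = [k, l] then 1 else 0) [i, j])"

definition Qhat :: "nat \<Rightarrow> (real \<Rightarrow> real \<Rightarrow> op2) \<Rightarrow> real \<Rightarrow> real \<Rightarrow> op2" where
  "Qhat r Q y1 y2 = ent (\<lambda>v. Sflip (op_at r 0 (Q y2 y1) (Sflip v)))"

text \<open><Q~ e_i\<otimes>e_j, e_k\<otimes>e_l> = <Q e_k\<otimes>e_i, e_l\<otimes>e_j>, i.e. entry (kl),(ij) of Q~
equals entry (lj),(ki) of Q.\<close>
definition Qtilde :: "(real \<Rightarrow> real \<Rightarrow> op2) \<Rightarrow> real \<Rightarrow> real \<Rightarrow> op2" where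
  "Qtilde Q y1 y2 = (\<lambda>k l i j. Q y1 y2 l j k i)"

definition Qker :: "nat \<Rightarrow> (real \<Rightarrow> real \<Rightarrow> op2) \<Rightarrow> nat \<Rightarrow> 'z kernel \<Rightarrow> 'z kernel" where
  "Qker r M i f = (\<lambda>xs. op_at r i (M (fst (xs ! i)) (fst (xs ! Suc i))) (f (lswap i xs)))"

text \<open>g(x_1..x_{n-2}) = \<integral>_X Tr_i f(x_1,..,x_{i-1},x,x,x_i,..,x_{n-2}) dx  (0-indexed i)\<close>
definition contr :: "nat \<Rightarrow> nat \<Rightarrow> ('z::euclidean_space) kernel \<Rightarrow> 'z kernel" where
  "contr r i f = (\<lambda>xs is. integral\<^sup>L lborel (\<lambda>x::real \<times> 'z.
      \<Sum>k<r. f (take i xs @ [x, x] @ drop i xs) (take i is @ [k, k] @ drop i is)))"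

definition tmul :: "'z mterm \<Rightarrow> 'z mterm \<Rightarrow> 'z mterm" where
  "tmul a b = (fst a @ fst b, (\<lambda>xs is. snd a (take (length (fst a)) xs) (take (length (fst a)) is)
                                   * snd b (drop (length (fst a)) xs) (drop (length (fst a)) is)))"

definition tstar :: "'z mterm \<Rightarrow> 'z mterm" where
  "tstar a = (rev (map Not (fst a)), (\<lambda>xs is. cnj (snd a (rev xs) (rev is))))"

definition one_term :: "'z mterm" where
  "one_term = ([], (\<lambda>xs is. 1))"

text \<open>Elements of the algebra as finite formal sums (lists) of terms.\<close>
definition amul :: "'z mterm list \<Rightarrow> 'z mterm list \<Rightarrow> 'z mterm list" where
  "amul as bs = concat (map (\<lambda>a. map (tmul a) bs) as)"

definition astar :: "'z mterm list \<Rightarrow> 'z mterm list" where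
  "astar as = map tstar as"

definition tauA :: "('z mterm \<Rightarrow> complex) \<Rightarrow> 'z mterm list \<Rightarrow> complex" where
  "tauA \<tau> as = (\<Sum>a\<leftarrow>as. \<tau> a)"

definition in_alg :: "nat \<Rightarrow> ('z::euclidean_space) mterm \<Rightarrow> bool" where
  "in_alg r a \<longleftrightarrow> snd a \<in> Fsp r (length (fst a))"

definition Aop :: "bool \<Rightarrow> 'z kernel \<Rightarrow> 'z mterm" where
  "Aop sg f = ([sg], f)"

definition Bop :: "'z kernel \<Rightarrow> 'z mterm list" where
  "Bop f = [Aop True f, Aop False (\<lambda>xs is. cnj (f xs is))]"

definition QYB :: "nat \<Rightarrow> (real \<Rightarrow> real \<Rightarrow> op2) \<Rightarrow> bool" where
  "QYB r Q \<longleftrightarrow>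
    (\<forall>i<r. \<forall>j<r. \<forall>k<r. \<forall>l<r. continuous_on UNIV (\<lambda>p::real \<times> real. Q (fst p) (snd p) i j k l)) \<and>
    (\<forall>y1 y2. \<forall>k<r. \<forall>l<r. \<forall>k'<r. \<forall>l'<r.
        (\<Sum>i<r. \<Sum>j<r. cnj (Q y1 y2 i j k l) * Q y1 y2 i j k' l') = (if k = k' \<and> l = l' then 1 else 0)
      \<and> (\<Sum>i<r. \<Sum>j<r. Q y1 y2 k l i j * cnj (Q y1 y2 k' l' i j)) = (if k = k' \<and> l = l' then 1 else 0)) \<and>
    (\<forall>y1 y2. \<forall>i<r. \<forall>j<r. \<forall>k<r. \<forall>l<r. cnj (Q y1 y2 k l i j) = Q y2 y1 i j k l) \<and>
    (\<forall>y1 y2 y3 v is. mi r 3 is \<longrightarrow>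
        op_at r 0 (Q y1 y2) (op_at r 1 (Q y1 y3) (op_at r 0 (Q y2 y3) v)) is
      = op_at r 1 (Q y2 y3) (op_at r 0 (Q y1 y3) (op_at r 1 (Q y1 y2) v)) is)"

text \<open>States on the Q-MCR algebra: linear functionals on the span of the terms which
are compatible with linearity of Phi in f, with the identification of kernels as
elements of L^2-type spaces (a.e. equality), and with the defining relations;
normalised and positive.\<close>
definition mcr_state :: "nat \<Rightarrow> (real \<Rightarrow> real \<Rightarrow> op2) \<Rightarrow> (('z::euclidean_space) mterm \<Rightarrow> complex) \<Rightarrow> bool" where
  "mcr_state r Q \<tau> \<longleftrightarrow>
    \<tau> one_term = 1 \<and>
    (\<forall>s f h c. f \<in> Fsp r (length s) \<longrightarrow> h \<in> Fsp r (length s) \<longrightarrow>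
        \<tau> (s, \<lambda>xs is. f xs is + h xs is) = \<tau> (s, f) + \<tau> (s, h) \<and>
        \<tau> (s, \<lambda>xs is. c * f xs is) = c * \<tau> (s, f)) \<and>
    (\<forall>s f f'. f \<in> Fsp r (length s) \<longrightarrow>
        (\<forall>is. mi r (length s) is \<longrightarrow>
          (AE v in PiM {..<length s} (\<lambda>_. lborel :: (real \<times> 'z) measure).
             f (map v [0..<length s]) is = f' (map v [0..<length s]) is)) \<longrightarrow>
        \<tau> (s, f) = \<tau> (s, f')) \<and>
    (\<forall>s f i. f \<in> Fsp r (length s) \<longrightarrow> Suc i < length s \<longrightarrow>
        (s ! i \<and> s ! Suc i \<longrightarrow> \<tau> (s, f) = \<tau> (s, Qker r Q i f)) \<and>
        (\<not> s ! i \<and> \<not> s ! Suc i \<longrightarrow> \<tau> (s, f) = \<tau> (s, Qker r (Qhat r Q) i f)) \<and>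
        (\<not> s ! i \<and> s ! Suc i \<longrightarrow>
           \<tau> (s, f) = \<tau> (lswap i s, Qker r (\<lambda>a b. Qtilde Q b a) i f)
                     + \<tau> (take i s @ drop (Suc (Suc i)) s, contr r i f))) \<and>
    (\<forall>as. (\<forall>a\<in>set as. in_alg r a) \<longrightarrow>
        Im (tauA \<tau> (amul (astar as) as)) = 0 \<and> 0 \<le> Re (tauA \<tau> (amul (astar as) as)))"

text \<open>Continuity assumption (sequential, w.r.t. the inductive-limit convergence on C_0).\<close>
definition mcr_cont :: "nat \<Rightarrow> (('z::euclidean_space) mterm \<Rightarrow> complex) \<Rightarrow> bool" where
  "mcr_cont r \<tau> \<longleftrightarrow>
    (\<forall>s gs. length gs = length s \<longrightarrow> (\<forall>g\<in>set gs. L2 g) \<longrightarrow>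
      (\<forall>\<phi>s \<phi>. (\<forall>k. Cc r (length s) (\<phi>s k)) \<longrightarrow> Cc r (length s) \<phi> \<longrightarrow>
         (\<exists>C. \<forall>k ys is. length ys = length s \<longrightarrow> mi r (length s) is \<longrightarrow>
               (\<exists>y\<in>set ys. C < \<bar>y\<bar>) \<longrightarrow> \<phi>s k ys is = 0 \<and> \<phi> ys is = 0) \<longrightarrow>
         (\<forall>\<epsilon>>0. \<exists>N. \<forall>k\<ge>N. \<forall>ys is. length ys = length s \<longrightarrow> mi r (length s) is \<longrightarrow>
               cmod (\<phi>s k ys is - \<phi> ys is) < \<epsilon>) \<longrightarrow>
         (\<lambda>k. \<tau> (s, prodker (\<phi>s k) gs)) \<longlonglongrightarrow> \<tau> (s, prodker \<phi> gs)))"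

definition Aword :: "bool list \<Rightarrow> (real \<Rightarrow> nat \<Rightarrow> complex) list \<Rightarrow> ('z \<Rightarrow> complex) list \<Rightarrow> 'z mterm" where
  "Aword sgs \<phi>s gs = foldr tmul (map (\<lambda>(sg, \<phi>, g). Aop sg (ker1 \<phi> g)) (zip sgs (zip \<phi>s gs))) one_term"

definition Bword :: "(real \<Rightarrow> nat \<Rightarrow> complex) list \<Rightarrow> ('z \<Rightarrow> complex) list \<Rightarrow> 'z mterm list" where
  "Bword \<phi>s gs = foldr amul (map (\<lambda>(\<phi>, g). Bop (ker1 \<phi> g)) (zip \<phi>s gs)) [one_term]"

end

theory Submission
  imports Defs
begin

text \<open>Every element of the algebra is a combination of terms \<open>\<Phi>(f; s)\<close>. By linearity, the
  continuity assumption and a Stone-Weierstrass argument on \<open>C\<^sub>0(Y\<^sup>n)\<close>, a state is determined by its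
  values on kernels \<open>(\<phi>\<^sub>1 \<otimes> g\<^sub>1) \<dots> (\<phi>\<^sub>n \<otimes> g\<^sub>n)\<close> with real \<open>\<phi>\<^sub>k\<close>. If the sign word \<open>s\<close>
  contains a \<open>-\<close> directly followed by a \<open>+\<close>, the exchange relation rewrites such a term as a term
  of the same length with one inversion less plus a contracted term of length two less, so induction
  on (length, number of inversions) leaves only the normally ordered words \<open>A\<^sup>+ \<dots> A\<^sup>+ A\<^sup>- \<dots> A\<^sup>-\<close>:
  this is (i). For real \<open>\<phi>\<close>, \<open>B(\<phi> \<otimes> g) = A\<^sup>+(\<phi> \<otimes> g) + A\<^sup>-(\<phi> \<otimes> cnj g)\<close>; replacing each
  \<open>g\<^sub>k\<close> by \<open>c\<^sub>k g\<^sub>k\<close> with \<open>c\<^sub>k \<in> {1, \<i>}\<close> and polarizing isolates the value on every single sign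
  word, so (ii) reduces to (i).\<close>

fun tensor_ker :: "(real \<Rightarrow> nat \<Rightarrow> complex) list \<Rightarrow> ('z \<Rightarrow> complex) list \<Rightarrow> 'z kernel" where
  "tensor_ker (\<phi> # \<phi>s) (g # gs) (x # xs) (i # is) = \<phi> (fst x) i * g (snd x) * tensor_ker \<phi>s gs xs is"
| "tensor_ker _ _ _ _ = 1"

definition tensor_fun :: "(real \<Rightarrow> nat \<Rightarrow> complex) list \<Rightarrow> real list \<Rightarrow> vec" where
  "tensor_fun \<phi>s ys is = (\<Prod>k<length \<phi>s. (\<phi>s ! k) (ys ! k) (is ! k))"

lemma tensor_ker_eq_prod:
  assumes "length gs = length \<phi>s" "length xs = length \<phi>s" "length is = length \<phi>s"
  shows "tensor_ker \<phi>s gs xs is = (\<Prod>k<length \<phi>s. (\<phi>s ! k) (fst (xs ! k)) (is ! k) * (gs ! k) (snd (xs ! k)))"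
  using assms
proof (induction \<phi>s arbitrary: gs xs "is")
  case Nil
  then show ?case by simp
next
  case (Cons \<phi> \<phi>s)
  then show ?case
    by (cases gs; cases xs; cases "is") (auto simp del: prod.lessThan_Suc simp: prod.lessThan_Suc_shift)
qed

lemma tensor_ker_append:
  assumes "length gs = length \<phi>s" "length xs = length \<phi>s" "length is = length \<phi>s"
  shows "tensor_ker (\<phi>s @ \<phi>s') (gs @ gs') (xs @ xs') (is @ is') =
    tensor_ker \<phi>s gs xs is * tensor_ker \<phi>s' gs' xs' is'"
  using assms
proof (induction \<phi>s arbitrary: gs xs "is")
  case Nil
  then show ?case by simp
next
  case (Cons \<phi> \<phi>s)
  then show ?case by (cases gs; cases xs; cases "is") auto
qed

lemma tensor_ker_cong:
  assumes "length \<psi>s = length \<phi>s" "length gs = length \<phi>s" "length xs = length \<phi>s"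
    and "mi r (length \<phi>s) is"
    and "\<forall>k<length \<phi>s. \<forall>y j. j < r \<longrightarrow> (\<psi>s ! k) y j = (\<phi>s ! k) y j"
  shows "tensor_ker \<psi>s gs xs is = tensor_ker \<phi>s gs xs is"
  using assms unfolding mi_def by (simp add: tensor_ker_eq_prod)

lemma prodker_tensor_fun:
  assumes "length gs = length \<phi>s" "length xs = length \<phi>s" "length is = length \<phi>s"
  shows "prodker (tensor_fun \<phi>s) gs xs is = tensor_ker \<phi>s gs xs is"
  using assms by (simp add: prodker_def tensor_fun_def tensor_ker_eq_prod prod.distrib)

lemma prodker_add:
  "prodker (\<lambda>ys is. \<phi> ys is + \<psi> ys is) gs = (\<lambda>xs is. prodker \<phi> gs xs is + prodker \<psi> gs xs is)"
  by (auto simp: prodker_def algebra_simps)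

lemma prodker_scale: "prodker (\<lambda>ys is. c * \<phi> ys is) gs = (\<lambda>xs is. c * prodker \<phi> gs xs is)"
  by (auto simp: prodker_def algebra_simps)

lemma Aword_Cons: "Aword (s # ss) (\<phi> # \<phi>s) (g # gs) = tmul (Aop s (ker1 \<phi> g)) (Aword ss \<phi>s gs)"
  by (simp add: Aword_def)

lemma fst_Aword: "length \<phi>s = length ss \<Longrightarrow> length gs = length ss \<Longrightarrow> fst (Aword ss \<phi>s gs) = ss"
proof (induction ss arbitrary: \<phi>s gs)
  case Nil
  then show ?case by (simp add: Aword_def one_term_def)
next
  case (Cons s ss)
  then show ?case by (cases \<phi>s; cases gs) (auto simp: Aword_Cons tmul_def Aop_def)
qed

lemma snd_Aword:
  "length \<phi>s = length ss \<Longrightarrow> length gs = length ss \<Longrightarrow> length xs = length ss \<Longrightarrow> length is = length ss \<Longrightarrow>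
   snd (Aword ss \<phi>s gs) xs is = tensor_ker \<phi>s gs xs is"
proof (induction ss arbitrary: \<phi>s gs xs "is")
  case Nil
  then show ?case by (simp add: Aword_def one_term_def)
next
  case (Cons s ss)
  then show ?case
    by (cases \<phi>s; cases gs; cases xs; cases "is") (auto simp: Aword_Cons tmul_def Aop_def ker1_def)
qed

lemma finite_mi: "finite {is. mi r n is}"
proof -
  have "{is. mi r n is} = {is. set is \<subseteq> {..<r} \<and> length is = n}"
    unfolding mi_def by auto
  then show ?thesis using finite_lists_length_eq[of "{..<r}" n] by simp
qed

lemma Cc1_list_support_bound:
  assumes "\<forall>\<phi>\<in>set \<phi>s. Cc1 r \<phi>"
  shows "\<exists>C. \<forall>\<phi>\<in>set \<phi>s. \<forall>y j. j < r \<longrightarrow> C < \<bar>y\<bar> \<longrightarrow> \<phi> y j = 0"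
proof -
  have "\<forall>\<phi>\<in>set \<phi>s. \<forall>j\<in>{..<r}. \<forall>\<^sub>F C in at_top. \<forall>y. C < \<bar>y\<bar> \<longrightarrow> \<phi> y j = 0"
    using assms unfolding Cc1_def eventually_at_top_linorder by (meson order.strict_trans1 lessThan_iff)
  then have "\<forall>\<^sub>F C in at_top. \<forall>\<phi>\<in>set \<phi>s. \<forall>j\<in>{..<r}. \<forall>y. C < \<bar>y\<bar> \<longrightarrow> \<phi> y j = 0"
    by (intro eventually_ball_finite ballI) auto
  then show ?thesis unfolding eventually_at_top_linorder by blast
qed

lemma Cc_support_bound:
  assumes "Cc r n \<phi>"
  shows "\<exists>C. \<forall>is ys. mi r n is \<longrightarrow> length ys = n \<longrightarrow> (\<exists>y\<in>set ys. C < \<bar>y\<bar>) \<longrightarrow> \<phi> ys is = 0"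
proof -
  have "\<forall>is\<in>{is. mi r n is}.
      \<forall>\<^sub>F C in at_top. \<forall>ys. length ys = n \<longrightarrow> (\<exists>y\<in>set ys. C < \<bar>y\<bar>) \<longrightarrow> \<phi> ys is = 0"
  proof
    fix "is" assume "is \<in> {is. mi r n is}"
    then obtain C where "\<forall>ys. length ys = n \<longrightarrow> (\<exists>y\<in>set ys. C < \<bar>y\<bar>) \<longrightarrow> \<phi> ys is = 0"
      using assms unfolding Cc_def by blast
    then show "\<forall>\<^sub>F C in at_top. \<forall>ys. length ys = n \<longrightarrow> (\<exists>y\<in>set ys. C < \<bar>y\<bar>) \<longrightarrow> \<phi> ys is = 0"
      unfolding eventually_at_top_linorder by (meson order.strict_trans1)
  qed
  then have "\<forall>\<^sub>F C in at_top. \<forall>is\<in>{is. mi r n is}.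
      \<forall>ys. length ys = n \<longrightarrow> (\<exists>y\<in>set ys. C < \<bar>y\<bar>) \<longrightarrow> \<phi> ys is = 0"
    by (rule eventually_ball_finite[OF finite_mi])
  then show ?thesis unfolding eventually_at_top_linorder by blast
qed

lemma Cc_tensor_fun:
  assumes "\<forall>\<phi>\<in>set \<phi>s. Cc1 r \<phi>"
  shows "Cc r (length \<phi>s) (tensor_fun \<phi>s)"
  unfolding Cc_def
proof (intro allI impI conjI)
  fix "is" assume mi: "mi r (length \<phi>s) is"
  have "continuous_on UNIV (\<lambda>v::nat \<Rightarrow> real. (\<phi>s ! k) (v k) (is ! k))" if "k < length \<phi>s" for k
  proof -
    have "continuous_on UNIV (\<lambda>y. (\<phi>s ! k) y (is ! k))"
      using assms that mi unfolding Cc1_def mi_def by auto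
    then show ?thesis
      using continuous_on_compose2[of UNIV _ UNIV "\<lambda>v::nat \<Rightarrow> real. v k"] by auto
  qed
  then show "continuous_on UNIV (\<lambda>v::nat \<Rightarrow> real. tensor_fun \<phi>s (map v [0..<length \<phi>s]) is)"
    unfolding tensor_fun_def by (auto intro!: continuous_on_prod)
next
  fix "is" assume mi: "mi r (length \<phi>s) is"
  obtain C where C: "\<forall>\<phi>\<in>set \<phi>s. \<forall>y j. j < r \<longrightarrow> C < \<bar>y\<bar> \<longrightarrow> \<phi> y j = 0"
    using Cc1_list_support_bound[OF assms] by blast
  show "\<exists>C. \<forall>ys. length ys = length \<phi>s \<longrightarrow> (\<exists>y\<in>set ys. C < \<bar>y\<bar>) \<longrightarrow> tensor_fun \<phi>s ys is = 0"
  proof (intro exI allI impI)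
    fix ys :: "real list" assume len: "length ys = length \<phi>s" and "\<exists>y\<in>set ys. C < \<bar>y\<bar>"
    then obtain k where k: "k < length ys" "C < \<bar>ys ! k\<bar>" by (metis in_set_conv_nth)
    then have "(\<phi>s ! k) (ys ! k) (is ! k) = 0"
      using C mi len unfolding mi_def by (metis nth_mem)
    then show "tensor_fun \<phi>s ys is = 0"
      unfolding tensor_fun_def using k len by (metis finite_lessThan lessThan_iff prod_zero_iff)
  qed
qed

lemma Cc_add:
  assumes "Cc r n \<phi>" "Cc r n \<psi>"
  shows "Cc r n (\<lambda>ys is. \<phi> ys is + \<psi> ys is)"
  unfolding Cc_def
proof (intro allI impI conjI)
  fix "is" assume mi: "mi r n is"
  then show "continuous_on UNIV (\<lambda>v. \<phi> (map v [0..<n]) is + \<psi> (map v [0..<n]) is)"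
    using assms unfolding Cc_def by (auto intro!: continuous_on_add)
  obtain C1 C2 where "\<forall>ys. length ys = n \<longrightarrow> (\<exists>y\<in>set ys. C1 < \<bar>y\<bar>) \<longrightarrow> \<phi> ys is = 0"
    "\<forall>ys. length ys = n \<longrightarrow> (\<exists>y\<in>set ys. C2 < \<bar>y\<bar>) \<longrightarrow> \<psi> ys is = 0"
    using assms mi unfolding Cc_def by blast
  then show "\<exists>C. \<forall>ys. length ys = n \<longrightarrow> (\<exists>y\<in>set ys. C < \<bar>y\<bar>) \<longrightarrow> \<phi> ys is + \<psi> ys is = 0"
    by (intro exI[of _ "max C1 C2"]) force
qed

lemma Cc_scale: "Cc r n \<phi> \<Longrightarrow> Cc r n (\<lambda>ys is. c * \<phi> ys is)"
  unfolding Cc_def by (fastforce intro!: continuous_on_mult continuous_on_const)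

lemma Cc_zero: "Cc r n (\<lambda>ys is. 0)"
  unfolding Cc_def by auto

lemma Fsp_prodker:
  assumes "Cc r n \<phi>" "length gs = n" "\<forall>g\<in>set gs. L2 g"
  shows "prodker \<phi> gs \<in> Fsp r n"
  unfolding Fsp_def by (rule CollectI, rule exI[of _ "[(\<phi>, gs)]"]) (use assms in auto)

lemma zero_in_Fsp: "(\<lambda>xs is. 0) \<in> Fsp r n"
  unfolding Fsp_def by (rule CollectI, rule exI[of _ "[]"]) simp

lemma mcr_state_cong:
  assumes "mcr_state r Q \<tau>" "f \<in> Fsp r (length s)"
    and "\<And>xs is. length xs = length s \<Longrightarrow> mi r (length s) is \<Longrightarrow> f xs is = f' xs is"
  shows "\<tau> (s, f) = \<tau> (s, f')"
proof -
  have "\<forall>is. mi r (length s) is \<longrightarrow>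
          (AE v in PiM {..<length s} (\<lambda>_. lborel :: (real \<times> 'a) measure).
             f (map v [0..<length s]) is = f' (map v [0..<length s]) is)"
    using assms(3) by (auto intro!: AE_I2)
  then show ?thesis using assms(1,2) unfolding mcr_state_def by blast
qed

lemma mcr_state_add:
  assumes "mcr_state r Q \<tau>" "f \<in> Fsp r (length s)" "h \<in> Fsp r (length s)"
  shows "\<tau> (s, \<lambda>xs is. f xs is + h xs is) = \<tau> (s, f) + \<tau> (s, h)"
  using assms unfolding mcr_state_def by blast

lemma mcr_state_scale:
  assumes "mcr_state r Q \<tau>" "f \<in> Fsp r (length s)"
  shows "\<tau> (s, \<lambda>xs is. c * f xs is) = c * \<tau> (s, f)"
  using assms unfolding mcr_state_def by blast

lemma mcr_state_zero:
  assumes "mcr_state r Q \<tau>"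
  shows "\<tau> (s, \<lambda>xs is. 0) = 0"
  using mcr_state_scale[OF assms zero_in_Fsp, of s 0] by simp

lemma mcr_state_Nil:
  fixes \<tau> :: "('z::euclidean_space) mterm \<Rightarrow> complex"
  assumes st: "mcr_state r Q \<tau>" and f: "f \<in> Fsp r 0"
  shows "\<tau> ([], f) = f [] []"
proof -
  have "Cc r 0 (\<lambda>ys is. 1)"
    unfolding Cc_def by auto
  then have "prodker (\<lambda>ys is. 1) ([] :: ('z \<Rightarrow> complex) list) \<in> Fsp r 0"
    by (rule Fsp_prodker) auto
  then have one: "(\<lambda>xs is. 1) \<in> (Fsp r (length []) :: 'z kernel set)"
    by (simp add: prodker_def)
  have "\<tau> ([], f) = \<tau> ([], \<lambda>xs is. f [] [] * 1)"
    by (rule mcr_state_cong[OF st]) (use f in \<open>auto simp: mi_def\<close>)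
  also have "\<dots> = f [] [] * \<tau> one_term"
    unfolding one_term_def by (rule mcr_state_scale[OF st one])
  also have "\<tau> one_term = 1"
    using st unfolding mcr_state_def by blast
  finally show ?thesis by simp
qed

lemma mcr_state_exchange:
  assumes "mcr_state r Q \<tau>" "f \<in> Fsp r (length s)" "Suc i < length s" "\<not> s ! i" "s ! Suc i"
  shows "\<tau> (s, f) = \<tau> (lswap i s, Qker r (\<lambda>a b. Qtilde Q b a) i f)
                   + \<tau> (take i s @ drop (Suc (Suc i)) s, contr r i f)"
proof -
  have "\<forall>s f i. f \<in> Fsp r (length s) \<longrightarrow> Suc i < length s \<longrightarrow> \<not> s ! i \<and> s ! Suc i \<longrightarrow>
          \<tau> (s, f) = \<tau> (lswap i s, Qker r (\<lambda>a b. Qtilde Q b a) i f)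
                    + \<tau> (take i s @ drop (Suc (Suc i)) s, contr r i f)"
    using assms(1) unfolding mcr_state_def by (elim conjE) blast
  then show ?thesis using assms(2-5) by blast
qed

lemma mcr_states_eq_on_Fsp:
  assumes st1: "mcr_state r Q \<tau>1" and st2: "mcr_state r Q \<tau>2"
    and eq: "\<And>\<phi> gs. Cc r (length s) \<phi> \<Longrightarrow> length gs = length s \<Longrightarrow> \<forall>g\<in>set gs. L2 g \<Longrightarrow>
               \<tau>1 (s, prodker \<phi> gs) = \<tau>2 (s, prodker \<phi> gs)"
    and f: "f \<in> Fsp r (length s)"
  shows "\<tau>1 (s, f) = \<tau>2 (s, f)"
proof -
  obtain ps where ps: "\<forall>p\<in>set ps. Cc r (length s) (fst p) \<and> length (snd p) = length s \<and> (\<forall>g\<in>set (snd p). L2 g)"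
    and f_eq: "f = (\<lambda>xs is. \<Sum>p\<leftarrow>ps. prodker (fst p) (snd p) xs is)"
    using f unfolding Fsp_def by blast
  have "(\<lambda>xs is. \<Sum>p\<leftarrow>ps. prodker (fst p) (snd p) xs is) \<in> Fsp r (length s) \<and>
        \<tau>1 (s, \<lambda>xs is. \<Sum>p\<leftarrow>ps. prodker (fst p) (snd p) xs is)
      = \<tau>2 (s, \<lambda>xs is. \<Sum>p\<leftarrow>ps. prodker (fst p) (snd p) xs is)"
    using ps
  proof (induction ps)
    case Nil
    then show ?case using mcr_state_zero[OF st1] mcr_state_zero[OF st2] zero_in_Fsp by simp
  next
    case (Cons p ps)
    then have p: "Cc r (length s) (fst p)" "length (snd p) = length s" "\<forall>g\<in>set (snd p). L2 g"
      and IH: "(\<lambda>xs is. \<Sum>p\<leftarrow>ps. prodker (fst p) (snd p) xs is) \<in> Fsp r (length s)"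
        "\<tau>1 (s, \<lambda>xs is. \<Sum>p\<leftarrow>ps. prodker (fst p) (snd p) xs is)
       = \<tau>2 (s, \<lambda>xs is. \<Sum>p\<leftarrow>ps. prodker (fst p) (snd p) xs is)"
      by auto
    have "(\<lambda>xs is. \<Sum>p\<leftarrow>p # ps. prodker (fst p) (snd p) xs is) \<in> Fsp r (length s)"
      unfolding Fsp_def using Cons.prems by blast
    then show ?case
      using mcr_state_add[OF st1 Fsp_prodker[OF p] IH(1)] mcr_state_add[OF st2 Fsp_prodker[OF p] IH(1)]
        IH(2) eq[OF p] by simp
  qed
  then show ?thesis using f_eq by simp
qed

definition Cc_tendsto :: "nat \<Rightarrow> nat \<Rightarrow> (nat \<Rightarrow> real list \<Rightarrow> vec) \<Rightarrow> (real list \<Rightarrow> vec) \<Rightarrow> bool" where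
  "Cc_tendsto r n \<psi>s \<phi> \<longleftrightarrow>
     (\<exists>C. \<forall>k ys is. length ys = n \<longrightarrow> mi r n is \<longrightarrow>
            (\<exists>y\<in>set ys. C < \<bar>y\<bar>) \<longrightarrow> \<psi>s k ys is = 0 \<and> \<phi> ys is = 0) \<and>
     (\<forall>\<epsilon>>0. \<exists>N. \<forall>k\<ge>N. \<forall>ys is. length ys = n \<longrightarrow> mi r n is \<longrightarrow> cmod (\<psi>s k ys is - \<phi> ys is) < \<epsilon>)"

lemma mcr_cont_tendsto:
  assumes "mcr_cont r \<tau>" "length gs = length s" "\<forall>g\<in>set gs. L2 g"
    and "\<forall>k. Cc r (length s) (\<psi>s k)" "Cc r (length s) \<phi>" "Cc_tendsto r (length s) \<psi>s \<phi>"
  shows "(\<lambda>k. \<tau> (s, prodker (\<psi>s k) gs)) \<longlonglongrightarrow> \<tau> (s, prodker \<phi> gs)"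
proof -
  have support: "\<exists>C. \<forall>k ys is. length ys = length s \<longrightarrow> mi r (length s) is \<longrightarrow>
          (\<exists>y\<in>set ys. C < \<bar>y\<bar>) \<longrightarrow> \<psi>s k ys is = 0 \<and> \<phi> ys is = 0"
    and uniform: "\<forall>\<epsilon>>0. \<exists>N. \<forall>k\<ge>N. \<forall>ys is. length ys = length s \<longrightarrow> mi r (length s) is \<longrightarrow>
          cmod (\<psi>s k ys is - \<phi> ys is) < \<epsilon>"
    using assms(6) unfolding Cc_tendsto_def by blast+
  show ?thesis
    by (rule assms(1)[unfolded mcr_cont_def, rule_format,
          OF assms(2) assms(3)[rule_format] assms(4)[rule_format] assms(5) support uniform[rule_format]])
qed

section \<open>Density of tensor products of real test functions\<close>

definition prod_sum :: "nat \<Rightarrow> (real \<times> (nat \<Rightarrow> real \<Rightarrow> real)) list \<Rightarrow> (nat \<Rightarrow> real) \<Rightarrow> real" where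
  "prod_sum n L v = (\<Sum>(c, p)\<leftarrow>L. c * (\<Prod>k<n. p k (v k)))"

definition prod_sums :: "nat \<Rightarrow> ((nat \<Rightarrow> real) \<Rightarrow> real) set" where
  "prod_sums n = {prod_sum n L | L. \<forall>(c, p)\<in>set L. \<forall>k. continuous_on UNIV (p k)}"

definition prod_sum_mult ::
  "(real \<times> (nat \<Rightarrow> real \<Rightarrow> real)) list \<Rightarrow> (real \<times> (nat \<Rightarrow> real \<Rightarrow> real)) list \<Rightarrow>
   (real \<times> (nat \<Rightarrow> real \<Rightarrow> real)) list" where
  "prod_sum_mult La Lb = concat (map (\<lambda>(c, p). map (\<lambda>(c', p'). (c * c', \<lambda>k y. p k y * p' k y)) Lb) La)"

lemma prod_sum_append: "prod_sum n (La @ Lb) v = prod_sum n La v + prod_sum n Lb v"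
  by (simp add: prod_sum_def)

lemma prod_sum_mult: "prod_sum n (prod_sum_mult La Lb) v = prod_sum n La v * prod_sum n Lb v"
proof (induction La)
  case Nil
  then show ?case by (simp add: prod_sum_def prod_sum_mult_def)
next
  case (Cons a La)
  obtain c p where a: "a = (c, p)" by fastforce
  have "prod_sum n (map (\<lambda>(c', p'). (c * c', \<lambda>k y. p k y * p' k y)) Lb) v
      = c * (\<Prod>k<n. p k (v k)) * prod_sum n Lb v"
    by (induction Lb) (auto simp: prod_sum_def prod.distrib algebra_simps)
  moreover have "prod_sum_mult (a # La) Lb
      = map (\<lambda>(c', p'). (c * c', \<lambda>k y. p k y * p' k y)) Lb @ prod_sum_mult La Lb"
    by (simp add: prod_sum_mult_def a)
  ultimately show ?case using Cons by (simp add: prod_sum_append a prod_sum_def algebra_simps)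
qed

lemma continuous_on_prod_sum:
  assumes "\<forall>(c, p)\<in>set L. \<forall>k. continuous_on UNIV (p k)"
  shows "continuous_on UNIV (prod_sum n L)"
  using assms
proof (induction L)
  case Nil
  then show ?case by (simp add: prod_sum_def)
next
  case (Cons a L)
  obtain c p where a: "a = (c, p)" by fastforce
  have "continuous_on UNIV (\<lambda>v::nat \<Rightarrow> real. p k (v k))" for k
    using Cons.prems a continuous_on_compose2[of UNIV "p k" UNIV "\<lambda>v::nat \<Rightarrow> real. v k"] by auto
  then have "continuous_on UNIV (\<lambda>v::nat \<Rightarrow> real. c * (\<Prod>k<n. p k (v k)))"
    by (intro continuous_on_mult continuous_on_const continuous_on_prod) auto
  moreover have "prod_sum n (a # L) = (\<lambda>v. c * (\<Prod>k<n. p k (v k)) + prod_sum n L v)"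
    by (auto simp: prod_sum_def a)
  ultimately show ?case using Cons by (auto intro!: continuous_on_add)
qed

lemma prod_sums_dense:
  fixes S :: "(nat \<Rightarrow> real) set"
  assumes "compact S" and S: "\<And>v k. v \<in> S \<Longrightarrow> n \<le> k \<Longrightarrow> v k = 0"
    and "continuous_on S f" "0 < e"
  shows "\<exists>G\<in>prod_sums n. \<forall>v\<in>S. \<bar>f v - G v\<bar> < e"
proof -
  have "\<exists>G. G \<in> prod_sums n \<and> (\<forall>v\<in>S. \<bar>f v - G v\<bar> < e)"
  proof (rule Stone_Weierstrass_HOL[of S "\<lambda>G. G \<in> prod_sums n"])
    fix c :: real
    have "(\<lambda>v. c) = prod_sum n [(c, \<lambda>k y. 1)]" by (auto simp: prod_sum_def)
    then show "(\<lambda>v. c) \<in> prod_sums n" unfolding prod_sums_def by force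
  next
    fix G assume "G \<in> prod_sums n"
    then show "continuous_on S G"
      unfolding prod_sums_def using continuous_on_prod_sum continuous_on_subset by blast
  next
    fix G H assume "G \<in> prod_sums n \<and> H \<in> prod_sums n"
    then obtain La Lb where L: "G = prod_sum n La" "H = prod_sum n Lb"
      "\<forall>(c, p)\<in>set La. \<forall>k. continuous_on UNIV (p k)" "\<forall>(c, p)\<in>set Lb. \<forall>k. continuous_on UNIV (p k)"
      unfolding prod_sums_def by blast
    have "(\<lambda>x. G x + H x) = prod_sum n (La @ Lb)" using L by (auto simp: prod_sum_append)
    then show "(\<lambda>x. G x + H x) \<in> prod_sums n" unfolding prod_sums_def using L by force
    have "(\<lambda>x. G x * H x) = prod_sum n (prod_sum_mult La Lb)" using L by (auto simp: prod_sum_mult)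
    moreover have "\<forall>(c, p)\<in>set (prod_sum_mult La Lb). \<forall>k. continuous_on UNIV (p k)"
      using L(3,4) by (fastforce simp: prod_sum_mult_def intro!: continuous_on_mult)
    ultimately show "(\<lambda>x. G x * H x) \<in> prod_sums n" unfolding prod_sums_def by blast
  next
    fix x y assume xy: "x \<in> S \<and> y \<in> S \<and> x \<noteq> y"
    then obtain k where k: "x k \<noteq> y k" by auto
    then have "k < n" using S xy by (metis not_le)
    define L where "L = [(1::real, \<lambda>k' (t::real). if k' = k then t else 1)]"
    have "prod_sum n L v = v k" for v
      using \<open>k < n\<close> by (simp add: prod_sum_def L_def prod.If_cases Int_absorb1)
    moreover have "continuous_on UNIV (\<lambda>t::real. if k' = k then t else 1)" for k'
      by (cases "k' = k") auto
    then have "\<forall>(c, p)\<in>set L. \<forall>k. continuous_on UNIV (p k)" by (auto simp: L_def)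
    ultimately show "\<exists>G. G \<in> prod_sums n \<and> G x \<noteq> G y"
      unfolding prod_sums_def using k by (intro exI[of _ "prod_sum n L"]) auto
  qed (use assms in auto)
  then show ?thesis by blast
qed

lemma prod_sums_dense_complex:
  fixes S :: "(nat \<Rightarrow> real) set" and F :: "(nat \<Rightarrow> real) \<Rightarrow> complex"
  assumes "compact S" "\<And>v k. v \<in> S \<Longrightarrow> n \<le> k \<Longrightarrow> v k = 0"
    and "continuous_on S F" "0 < e"
  shows "\<exists>GR\<in>prod_sums n. \<exists>GI\<in>prod_sums n. \<forall>v\<in>S. cmod (F v - (GR v + \<i> * GI v)) < e"
proof -
  obtain GR where GR: "GR \<in> prod_sums n" "\<forall>v\<in>S. \<bar>Re (F v) - GR v\<bar> < e / 2"
    using prod_sums_dense[of S n "\<lambda>v. Re (F v)" "e / 2"] continuous_on_Re[OF assms(3)] assms by auto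
  obtain GI where GI: "GI \<in> prod_sums n" "\<forall>v\<in>S. \<bar>Im (F v) - GI v\<bar> < e / 2"
    using prod_sums_dense[of S n "\<lambda>v. Im (F v)" "e / 2"] continuous_on_Im[OF assms(3)] assms by auto
  have "cmod (F v - (GR v + \<i> * GI v)) < e" if "v \<in> S" for v
    using cmod_le[of "F v - (GR v + \<i> * GI v)"] GR(2) GI(2) that by fastforce
  then show ?thesis using GR(1) GI(1) by blast
qed

definition coord_box :: "nat \<Rightarrow> real \<Rightarrow> (nat \<Rightarrow> real) set" where
  "coord_box n D = Pi\<^sub>E UNIV (\<lambda>k. if k < n then {-D..D} else {0})"

lemma compact_coord_box: "compact (coord_box n D)"
proof -
  have "compactin (product_topology (\<lambda>i. euclidean) UNIV) (coord_box n D)"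
    unfolding coord_box_def compactin_PiE by auto
  then show ?thesis by (simp add: euclidean_product_topology)
qed

lemma coord_box_zero: "v \<in> coord_box n D \<Longrightarrow> n \<le> k \<Longrightarrow> v k = 0"
  unfolding coord_box_def by (auto simp: PiE_iff) (metis empty_iff insert_iff not_le)

definition pad :: "nat \<Rightarrow> real list \<Rightarrow> nat \<Rightarrow> real" where
  "pad n ys = (\<lambda>k. if k < n then ys ! k else 0)"

definition cutoff :: "real \<Rightarrow> real \<Rightarrow> real" where
  "cutoff D y = max 0 (min 1 (D - \<bar>y\<bar>))"

definition cutoff_prod :: "nat \<Rightarrow> real \<Rightarrow> real list \<Rightarrow> real" where
  "cutoff_prod n D ys = (\<Prod>k<n. cutoff D (ys ! k))"

lemma continuous_on_cutoff: "continuous_on UNIV (cutoff D)"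
  unfolding cutoff_def by (intro continuous_intros)

lemma cutoff_prod_bounds: "0 \<le> cutoff_prod n D ys" "cutoff_prod n D ys \<le> 1"
  unfolding cutoff_prod_def cutoff_def by (auto intro: prod_nonneg prod_le_1)

lemma cutoff_prod_outside: "length ys = n \<Longrightarrow> \<exists>y\<in>set ys. D < \<bar>y\<bar> \<Longrightarrow> cutoff_prod n D ys = 0"
proof -
  assume "length ys = n" "\<exists>y\<in>set ys. D < \<bar>y\<bar>"
  then obtain k where "k < n" "D < \<bar>ys ! k\<bar>" by (metis in_set_conv_nth)
  then have "cutoff D (ys ! k) = 0" by (simp add: cutoff_def)
  then show "cutoff_prod n D ys = 0"
    unfolding cutoff_prod_def using \<open>k < n\<close> by (meson finite_lessThan lessThan_iff prod_zero_iff)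
qed

lemma cutoff_prod_inside: "length ys = n \<Longrightarrow> \<forall>y\<in>set ys. \<bar>y\<bar> \<le> D - 1 \<Longrightarrow> cutoff_prod n D ys = 1"
  unfolding cutoff_prod_def cutoff_def by (intro prod.neutral) (auto dest!: nth_mem)

inductive_set real_tensor_span :: "nat \<Rightarrow> nat \<Rightarrow> (real list \<Rightarrow> vec) set" for r n where
  tensor: "length \<phi>s = n \<Longrightarrow> \<forall>\<phi>\<in>set \<phi>s. Cc1_real r \<phi> \<Longrightarrow> tensor_fun \<phi>s \<in> real_tensor_span r n"
| zero: "(\<lambda>ys is. 0) \<in> real_tensor_span r n"
| add: "\<phi> \<in> real_tensor_span r n \<Longrightarrow> \<psi> \<in> real_tensor_span r n \<Longrightarrow>
    (\<lambda>ys is. \<phi> ys is + \<psi> ys is) \<in> real_tensor_span r n"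
| scale: "\<phi> \<in> real_tensor_span r n \<Longrightarrow> (\<lambda>ys is. c * \<phi> ys is) \<in> real_tensor_span r n"

lemma Cc_real_tensor_span: "\<phi> \<in> real_tensor_span r n \<Longrightarrow> Cc r n \<phi>"
proof (induction rule: real_tensor_span.induct)
  case (tensor \<phi>s)
  then show ?case using Cc_tensor_fun[of \<phi>s r] by (auto simp: Cc1_real_def)
qed (auto intro: Cc_zero Cc_add Cc_scale)

lemma real_tensor_span_sum:
  "finite I \<Longrightarrow> (\<And>i. i \<in> I \<Longrightarrow> F i \<in> real_tensor_span r n) \<Longrightarrow>
   (\<lambda>ys is. \<Sum>i\<in>I. F i ys is) \<in> real_tensor_span r n"
  by (induction I rule: finite_induct) (auto intro: real_tensor_span.intros)

lemma prod_indicator: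
  fixes n :: nat
  shows "(\<Prod>k<n. if P k then 1 else 0) = (if \<forall>k<n. P k then 1 else (0::'a::comm_semiring_1))"
  by (induction n) (auto simp: less_Suc_eq)

text \<open>The approximants: \<open>G\<close> lives on the coordinates of \<open>Y\<^sup>n\<close>, the cutoff makes the kernel compactly
  supported, and the indicator places it in the single component \<open>is0\<close> of \<open>V\<^sup>\<otimes>\<^sup>n\<close>.\<close>

definition cutoff_kernel :: "nat \<Rightarrow> real \<Rightarrow> ((nat \<Rightarrow> real) \<Rightarrow> real) \<Rightarrow> nat list \<Rightarrow> real list \<Rightarrow> vec" where
  "cutoff_kernel n D G is0 ys is =
     of_real (cutoff_prod n D ys * G (pad n ys)) * (if \<forall>k<n. is ! k = is0 ! k then 1 else 0)"

lemma cutoff_kernel_prod_in_span: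
  assumes p: "\<forall>k. continuous_on UNIV (p k)"
  shows "cutoff_kernel n D (prod_sum n [(c, p)]) is0 \<in> real_tensor_span r n"
proof -
  define \<psi>s :: "(real \<Rightarrow> nat \<Rightarrow> complex) list"
    where "\<psi>s = map (\<lambda>k y j. of_real (cutoff D y * p k y) * (if j = is0 ! k then 1 else 0)) [0..<n]"
  have "Cc1_real r \<psi>" if \<psi>: "\<psi> \<in> set \<psi>s" for \<psi>
  proof -
    obtain k where k: "\<psi> = (\<lambda>y j. of_real (cutoff D y * p k y) * (if j = is0 ! k then 1 else 0))"
      using \<psi> unfolding \<psi>s_def set_map by blast
    have "continuous_on UNIV (\<lambda>y. complex_of_real (cutoff D y * p k y) * (if j = is0 ! k then 1 else 0))" for j
      using p by (intro continuous_intros continuous_on_cutoff[THEN continuous_on_compose2]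
          spec[OF p, THEN continuous_on_compose2]) auto
    moreover have "\<forall>y. D < \<bar>y\<bar> \<longrightarrow> \<psi> y j = 0" for j
      by (simp add: k cutoff_def)
    ultimately show ?thesis
      unfolding Cc1_real_def Cc1_def k by (intro conjI allI impI exI[of _ D]) (auto simp del: of_real_mult)
  qed
  then have "(\<lambda>ys is. of_real c * tensor_fun \<psi>s ys is) \<in> real_tensor_span r n"
    by (intro real_tensor_span.scale real_tensor_span.tensor) (auto simp: \<psi>s_def)
  moreover have "cutoff_kernel n D (prod_sum n [(c, p)]) is0 = (\<lambda>ys is. of_real c * tensor_fun \<psi>s ys is)"
  proof (intro ext)
    fix ys "is"
    have "tensor_fun \<psi>s ys is
        = (\<Prod>k<n. of_real (cutoff D (ys ! k) * p k (ys ! k)) * (if is ! k = is0 ! k then 1 else 0))"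
      unfolding tensor_fun_def \<psi>s_def by (auto intro!: prod.cong)
    also have "\<dots> = of_real (cutoff_prod n D ys * (\<Prod>k<n. p k (ys ! k)))
        * (if \<forall>k<n. is ! k = is0 ! k then 1 else 0)"
      unfolding prod.distrib prod_indicator cutoff_prod_def by (simp add: prod.distrib)
    finally show "cutoff_kernel n D (prod_sum n [(c, p)]) is0 ys is = of_real c * tensor_fun \<psi>s ys is"
      by (simp add: cutoff_kernel_def prod_sum_def pad_def)
  qed
  ultimately show ?thesis by simp
qed

lemma cutoff_kernel_in_span:
  assumes "G \<in> prod_sums n"
  shows "cutoff_kernel n D G is0 \<in> real_tensor_span r n"
proof -
  obtain L where L: "G = prod_sum n L" "\<forall>(c, p)\<in>set L. \<forall>k. continuous_on UNIV (p k)"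
    using assms unfolding prod_sums_def by blast
  have "cutoff_kernel n D (prod_sum n L) is0 \<in> real_tensor_span r n"
    using L(2)
  proof (induction L)
    case Nil
    have "cutoff_kernel n D (prod_sum n []) is0 = (\<lambda>ys is. 0)"
      by (simp add: cutoff_kernel_def prod_sum_def fun_eq_iff)
    then show ?case by (simp add: real_tensor_span.zero)
  next
    case (Cons a L)
    obtain c p where a: "a = (c, p)" by fastforce
    have "cutoff_kernel n D (prod_sum n (a # L)) is0
        = (\<lambda>ys is. cutoff_kernel n D (prod_sum n [(c, p)]) is0 ys is + cutoff_kernel n D (prod_sum n L) is0 ys is)"
      unfolding fun_eq_iff by (simp add: cutoff_kernel_def prod_sum_def a algebra_simps)
    then show ?case
      using Cons cutoff_kernel_prod_in_span[of p n D c is0 r] a by (auto intro: real_tensor_span.add)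
  qed
  then show ?thesis using L by simp
qed

lemma cutoff_kernel_sum:
  assumes "mi r n is"
  shows "(\<Sum>is0\<in>{is. mi r n is}. cutoff_kernel n D (GR is0) is0 ys is + \<i> * cutoff_kernel n D (GI is0) is0 ys is)
       = of_real (cutoff_prod n D ys) * (GR is (pad n ys) + \<i> * GI is (pad n ys))"
proof -
  have "(\<forall>k<n. is ! k = is0 ! k) \<longleftrightarrow> is0 = is" if "mi r n is0" for is0
    using that assms unfolding mi_def by (auto intro: nth_equalityI)
  then have "(\<Sum>is0\<in>{is. mi r n is}. cutoff_kernel n D (GR is0) is0 ys is + \<i> * cutoff_kernel n D (GI is0) is0 ys is)
      = (\<Sum>is0\<in>{is. mi r n is}. if is0 = is
           then of_real (cutoff_prod n D ys) * (GR is0 (pad n ys) + \<i> * GI is0 (pad n ys)) else 0)"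
    by (intro sum.cong) (auto simp: cutoff_kernel_def algebra_simps)
  then show ?thesis using finite_mi assms by (simp add: sum.delta')
qed

lemma cutoff_prod_mult_eq:
  assumes "\<forall>is ys. mi r n is \<longrightarrow> length ys = n \<longrightarrow> (\<exists>y\<in>set ys. D0 < \<bar>y\<bar>) \<longrightarrow> \<phi> ys is = 0"
    and "length ys = n" "mi r n is"
  shows "of_real (cutoff_prod n (D0 + 1) ys) * \<phi> ys is = \<phi> ys is"
proof (cases "\<exists>y\<in>set ys. D0 < \<bar>y\<bar>")
  case True
  then show ?thesis using assms by simp
next
  case False
  then show ?thesis using cutoff_prod_inside[of ys n "D0 + 1"] assms(2) by fastforce
qed

lemma real_tensor_span_approx:
  assumes \<phi>: "Cc r n \<phi>"
    and D0: "\<forall>is ys. mi r n is \<longrightarrow> length ys = n \<longrightarrow> (\<exists>y\<in>set ys. D0 < \<bar>y\<bar>) \<longrightarrow> \<phi> ys is = 0"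
    and "0 < e"
  shows "\<exists>\<psi>\<in>real_tensor_span r n.
           (\<forall>ys is. length ys = n \<longrightarrow> (\<exists>y\<in>set ys. D0 + 1 < \<bar>y\<bar>) \<longrightarrow> \<psi> ys is = 0) \<and>
           (\<forall>ys is. length ys = n \<longrightarrow> mi r n is \<longrightarrow> cmod (\<psi> ys is - \<phi> ys is) < e)"
proof -
  define D where "D = D0 + 1"
  have "\<exists>GR\<in>prod_sums n. \<exists>GI\<in>prod_sums n.
          \<forall>v\<in>coord_box n D. cmod (\<phi> (map v [0..<n]) is0 - (GR v + \<i> * GI v)) < e"
    if "mi r n is0" for is0
    using that \<phi> \<open>0 < e\<close> unfolding Cc_def
    by (intro prod_sums_dense_complex compact_coord_box) (auto intro: continuous_on_subset coord_box_zero)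
  then obtain GR GI where G: "\<And>is0. mi r n is0 \<Longrightarrow> GR is0 \<in> prod_sums n \<and> GI is0 \<in> prod_sums n \<and>
      (\<forall>v\<in>coord_box n D. cmod (\<phi> (map v [0..<n]) is0 - (GR is0 v + \<i> * GI is0 v)) < e)"
    by metis
  define \<psi> where "\<psi> = (\<lambda>ys is. \<Sum>is0\<in>{is. mi r n is}.
      cutoff_kernel n D (GR is0) is0 ys is + \<i> * cutoff_kernel n D (GI is0) is0 ys is)"
  have "\<psi> \<in> real_tensor_span r n"
    unfolding \<psi>_def using G
    by (intro real_tensor_span_sum finite_mi real_tensor_span.add real_tensor_span.scale cutoff_kernel_in_span) auto
  moreover have outside: "\<psi> ys is = 0" if "length ys = n" "\<exists>y\<in>set ys. D < \<bar>y\<bar>" for ys "is"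
    using cutoff_prod_outside[OF that] by (simp add: \<psi>_def cutoff_kernel_def)
  moreover have "cmod (\<psi> ys is - \<phi> ys is) < e" if ys: "length ys = n" and "is": "mi r n is" for ys "is"
  proof (cases "\<exists>y\<in>set ys. D < \<bar>y\<bar>")
    case True
    then show ?thesis using outside[OF ys True] D0 ys "is" \<open>0 < e\<close> unfolding D_def by force
  next
    case False
    then have "\<forall>k<n. \<bar>ys ! k\<bar> \<le> D" using ys by (metis nth_mem not_less)
    then have box: "pad n ys \<in> coord_box n D"
      by (auto simp: coord_box_def pad_def PiE_iff abs_le_iff)
    have "map (pad n ys) [0..<n] = ys" using ys by (auto intro!: nth_equalityI simp: pad_def)
    then have "\<psi> ys is - \<phi> ys is = of_real (cutoff_prod n D ys) *
        ((GR is (pad n ys) + \<i> * GI is (pad n ys)) - \<phi> (map (pad n ys) [0..<n]) is)"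
      using cutoff_kernel_sum[OF "is", of D GR ys GI] cutoff_prod_mult_eq[OF D0 ys "is"]
      unfolding \<psi>_def D_def by (simp add: algebra_simps)
    also have "cmod \<dots> \<le> cmod ((GR is (pad n ys) + \<i> * GI is (pad n ys)) - \<phi> (map (pad n ys) [0..<n]) is)"
      using cutoff_prod_bounds[of n D ys] by (simp add: norm_mult mult_left_le_one_le)
    also have "\<dots> < e" using G[OF "is"] box by (simp add: norm_minus_commute)
    finally show ?thesis .
  qed
  ultimately show ?thesis unfolding D_def by blast
qed

lemma real_tensor_span_dense:
  assumes "Cc r n \<phi>"
  shows "\<exists>\<psi>s. (\<forall>k. \<psi>s k \<in> real_tensor_span r n) \<and> Cc_tendsto r n \<psi>s \<phi>"
proof -
  obtain D0 where D0: "\<forall>is ys. mi r n is \<longrightarrow> length ys = n \<longrightarrow> (\<exists>y\<in>set ys. D0 < \<bar>y\<bar>) \<longrightarrow> \<phi> ys is = 0"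
    using Cc_support_bound[OF assms] by blast
  have "\<forall>k. \<exists>\<psi>\<in>real_tensor_span r n.
           (\<forall>ys is. length ys = n \<longrightarrow> (\<exists>y\<in>set ys. D0 + 1 < \<bar>y\<bar>) \<longrightarrow> \<psi> ys is = 0) \<and>
           (\<forall>ys is. length ys = n \<longrightarrow> mi r n is \<longrightarrow> cmod (\<psi> ys is - \<phi> ys is) < inverse (Suc k))"
    using real_tensor_span_approx[OF assms D0] by simp
  then obtain \<psi>s where \<psi>s: "\<And>k. \<psi>s k \<in> real_tensor_span r n"
    "\<And>k ys is. length ys = n \<Longrightarrow> (\<exists>y\<in>set ys. D0 + 1 < \<bar>y\<bar>) \<Longrightarrow> \<psi>s k ys is = 0"
    "\<And>k ys is. length ys = n \<Longrightarrow> mi r n is \<Longrightarrow> cmod (\<psi>s k ys is - \<phi> ys is) < inverse (Suc k)"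
    by metis
  have "\<exists>N. \<forall>k\<ge>N. \<forall>ys is. length ys = n \<longrightarrow> mi r n is \<longrightarrow> cmod (\<psi>s k ys is - \<phi> ys is) < \<epsilon>"
    if \<epsilon>: "0 < \<epsilon>" for \<epsilon> :: real
  proof -
    obtain N where N: "inverse (real (Suc N)) < \<epsilon>" using reals_Archimedean[OF \<epsilon>] by blast
    have "inverse (real (Suc k)) < \<epsilon>" if "N \<le> k" for k
    proof -
      have "inverse (real (Suc k)) \<le> inverse (real (Suc N))"
        using that by (intro le_imp_inverse_le) auto
      then show ?thesis using N by linarith
    qed
    then show ?thesis using \<psi>s(3) by (meson order.strict_trans)
  qed
  moreover have "\<psi>s k ys is = 0 \<and> \<phi> ys is = 0"
    if "length ys = n" "mi r n is" "\<exists>y\<in>set ys. D0 + 1 < \<bar>y\<bar>" for k ys "is"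
    using that \<psi>s(2) D0 by force
  ultimately show ?thesis unfolding Cc_tendsto_def using \<psi>s(1) by blast
qed

lemma mcr_states_eq_on_prodker:
  assumes st1: "mcr_state r Q \<tau>1" and st2: "mcr_state r Q \<tau>2"
    and ct1: "mcr_cont r \<tau>1" and ct2: "mcr_cont r \<tau>2"
    and gs: "length gs = length s" "\<forall>g\<in>set gs. L2 g"
    and eq: "\<And>\<phi>s. length \<phi>s = length s \<Longrightarrow> \<forall>\<phi>\<in>set \<phi>s. Cc1_real r \<phi> \<Longrightarrow>
               \<tau>1 (s, prodker (tensor_fun \<phi>s) gs) = \<tau>2 (s, prodker (tensor_fun \<phi>s) gs)"
    and \<phi>: "Cc r (length s) \<phi>"
  shows "\<tau>1 (s, prodker \<phi> gs) = \<tau>2 (s, prodker \<phi> gs)"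
proof -
  have Fsp: "prodker \<psi> gs \<in> Fsp r (length s)" if "\<psi> \<in> real_tensor_span r (length s)" for \<psi>
    using Fsp_prodker[OF Cc_real_tensor_span[OF that] gs] .
  have span: "\<tau>1 (s, prodker \<psi> gs) = \<tau>2 (s, prodker \<psi> gs)" if "\<psi> \<in> real_tensor_span r (length s)" for \<psi>
    using that
  proof (induction rule: real_tensor_span.induct)
    case (tensor \<phi>s)
    then show ?case by (rule eq)
  next
    case zero
    then show ?case using mcr_state_zero[OF st1] mcr_state_zero[OF st2] by (simp add: prodker_def)
  next
    case (add \<phi> \<psi>)
    then show ?case by (simp add: prodker_add mcr_state_add[OF st1 Fsp Fsp] mcr_state_add[OF st2 Fsp Fsp])
  next
    case (scale \<phi> c)
    then show ?case by (simp add: prodker_scale mcr_state_scale[OF st1 Fsp] mcr_state_scale[OF st2 Fsp])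
  qed
  obtain \<psi>s where \<psi>s: "\<forall>k. \<psi>s k \<in> real_tensor_span r (length s)" "Cc_tendsto r (length s) \<psi>s \<phi>"
    using real_tensor_span_dense[OF \<phi>] by blast
  have Cc: "\<forall>k. Cc r (length s) (\<psi>s k)" using \<psi>s(1) Cc_real_tensor_span by blast
  have "(\<lambda>k. \<tau>1 (s, prodker (\<psi>s k) gs)) \<longlonglongrightarrow> \<tau>2 (s, prodker \<phi> gs)"
    using mcr_cont_tendsto[OF ct2 gs Cc \<phi> \<psi>s(2)] span \<psi>s(1) by simp
  then show ?thesis using mcr_cont_tendsto[OF ct1 gs Cc \<phi> \<psi>s(2)] LIMSEQ_unique by blast
qed

section \<open>The exchange relation on product kernels\<close>

lemma length_lswap [simp]: "length (lswap i xs) = length xs"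
  by (simp add: lswap_def)

lemma nth_lswap:
  "Suc i < length xs \<Longrightarrow> k < length xs \<Longrightarrow> lswap i xs ! k = xs ! Transposition.transpose i (Suc i) k"
  by (auto simp: lswap_def Transposition.transpose_def nth_list_update)

lemma map_lswap: "Suc i < length xs \<Longrightarrow> map f (lswap i xs) = lswap i (map f xs)"
  by (simp add: lswap_def map_update)

lemma set_lswap: "Suc i < length xs \<Longrightarrow> set (lswap i xs) = set xs"
  unfolding lswap_def by (rule set_swap) auto

lemma transpose_adjacent_less: "Suc i < n \<Longrightarrow> k < n \<Longrightarrow> Transposition.transpose i (Suc i) k < n"
  by (auto simp: Transposition.transpose_def)

lemma lswap_map_upt:
  "Suc i < n \<Longrightarrow> lswap i (map v [0..<n]) = map (\<lambda>k. v (Transposition.transpose i (Suc i) k)) [0..<n]"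
  by (rule nth_equalityI) (auto simp: nth_lswap transpose_adjacent_less)

lemma prod_transpose_adjacent:
  assumes "Suc i < n"
  shows "(\<Prod>m<n. F m (Transposition.transpose i (Suc i) m)) = (\<Prod>m<n. F (Transposition.transpose i (Suc i) m) m)"
  using assms prod.reindex_bij_betw[of "Transposition.transpose i (Suc i)" "{..<n}" "{..<n}"
      "\<lambda>m. F (Transposition.transpose i (Suc i) m) m"]
  by simp

lemma mi_update2: "mi r n is \<Longrightarrow> k < r \<Longrightarrow> l < r \<Longrightarrow> mi r n (is[i := k, Suc i := l])"
  unfolding mi_def by (auto dest!: set_update_subset_insert[THEN subsetD])

definition exchange_fun :: "nat \<Rightarrow> (real \<Rightarrow> real \<Rightarrow> op2) \<Rightarrow> nat \<Rightarrow> (real list \<Rightarrow> vec) \<Rightarrow> real list \<Rightarrow> vec" where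
  "exchange_fun r M i \<phi> ys = op_at r i (M (ys ! i) (ys ! Suc i)) (\<phi> (lswap i ys))"

lemma Qker_prodker:
  assumes "Suc i < length gs" "length xs = length gs"
  shows "Qker r M i (prodker \<phi> gs) xs is = prodker (exchange_fun r M i \<phi>) (lswap i gs) xs is"
proof -
  have "(\<Prod>m<length gs. (gs ! m) (snd (lswap i xs ! m)))
      = (\<Prod>m<length gs. (gs ! m) (snd (xs ! Transposition.transpose i (Suc i) m)))"
    using assms by (intro prod.cong refl) (simp add: nth_lswap)
  also have "\<dots> = (\<Prod>m<length gs. (gs ! Transposition.transpose i (Suc i) m) (snd (xs ! m)))"
    by (rule prod_transpose_adjacent[OF assms(1)])
  also have "\<dots> = (\<Prod>m<length gs. (lswap i gs ! m) (snd (xs ! m)))"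
    using assms by (intro prod.cong refl) (simp add: nth_lswap)
  finally have "(\<Prod>m<length gs. (gs ! m) (snd (lswap i xs ! m))) = (\<Prod>m<length gs. (lswap i gs ! m) (snd (xs ! m)))" .
  moreover have "map fst (lswap i xs) = lswap i (map fst xs)"
    using assms by (simp add: map_lswap)
  ultimately show ?thesis
    unfolding Qker_def prodker_def exchange_fun_def op_at_def
    using assms by (simp add: sum_distrib_right mult.assoc)
qed

lemma Cc_exchange_fun:
  assumes \<phi>: "Cc r n \<phi>" and i: "Suc i < n"
    and M: "\<And>a b c d. a < r \<Longrightarrow> b < r \<Longrightarrow> c < r \<Longrightarrow> d < r \<Longrightarrow>
              continuous_on UNIV (\<lambda>p::real \<times> real. M (fst p) (snd p) a b c d)"
  shows "Cc r n (exchange_fun r M i \<phi>)"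
  unfolding Cc_def
proof (intro allI impI conjI)
  fix "is" assume "is": "mi r n is"
  then have ir: "is ! i < r" "is ! Suc i < r" using i unfolding mi_def by auto
  have "continuous_on UNIV (\<lambda>v::nat \<Rightarrow> real. M (v i) (v (Suc i)) (is ! i) (is ! Suc i) k l)"
    if "k < r" "l < r" for k l
  proof -
    have "continuous_on UNIV (\<lambda>v::nat \<Rightarrow> real. (v i, v (Suc i)))"
      by (intro continuous_on_Pair continuous_on_product_coordinates)
    then show ?thesis
      using continuous_on_compose2[OF M[OF ir that], of UNIV "\<lambda>v::nat \<Rightarrow> real. (v i, v (Suc i))"] by auto
  qed
  moreover have "continuous_on UNIV
      (\<lambda>v::nat \<Rightarrow> real. \<phi> (map (\<lambda>m. v (Transposition.transpose i (Suc i) m)) [0..<n]) (is[i := k, Suc i := l]))"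
    if "k < r" "l < r" for k l
  proof -
    have "continuous_on UNIV (\<lambda>w::nat \<Rightarrow> real. \<phi> (map w [0..<n]) (is[i := k, Suc i := l]))"
      using \<phi> mi_update2[OF "is" that] unfolding Cc_def by blast
    moreover have "continuous_on UNIV (\<lambda>v::nat \<Rightarrow> real. (\<lambda>m. v (Transposition.transpose i (Suc i) m)))"
      by (intro continuous_on_coordinatewise_then_product continuous_on_product_coordinates)
    ultimately show ?thesis using continuous_on_compose2 by fastforce
  qed
  ultimately show "continuous_on UNIV (\<lambda>v::nat \<Rightarrow> real. exchange_fun r M i \<phi> (map v [0..<n]) is)"
    using i by (auto simp: exchange_fun_def op_at_def lswap_map_upt intro!: continuous_on_sum continuous_on_mult)
next
  fix "is" assume "is": "mi r n is"
  obtain C where C: "\<forall>is ys. mi r n is \<longrightarrow> length ys = n \<longrightarrow> (\<exists>y\<in>set ys. C < \<bar>y\<bar>) \<longrightarrow> \<phi> ys is = 0"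
    using Cc_support_bound[OF \<phi>] by blast
  show "\<exists>C. \<forall>ys. length ys = n \<longrightarrow> (\<exists>y\<in>set ys. C < \<bar>y\<bar>) \<longrightarrow> exchange_fun r M i \<phi> ys is = 0"
  proof (intro exI[of _ C] allI impI)
    fix ys :: "real list" assume "length ys = n" "\<exists>y\<in>set ys. C < \<bar>y\<bar>"
    then have "\<phi> (lswap i ys) (is[i := k, Suc i := l]) = 0" if "k < r" "l < r" for k l
      using C mi_update2[OF "is" that] set_lswap[of i ys] i by auto
    then show "exchange_fun r M i \<phi> ys is = 0" unfolding exchange_fun_def op_at_def by simp
  qed
qed

lemma QYB_continuous_Qtilde:
  assumes "QYB r Q" "a < r" "b < r" "c < r" "d < r"
  shows "continuous_on UNIV (\<lambda>p::real \<times> real. Qtilde Q (snd p) (fst p) a b c d)"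
proof -
  have "\<forall>i<r. \<forall>j<r. \<forall>k<r. \<forall>l<r. continuous_on UNIV (\<lambda>p::real \<times> real. Q (fst p) (snd p) i j k l)"
    using assms(1) unfolding QYB_def by (rule conjunct1)
  then have "continuous_on UNIV (\<lambda>p::real \<times> real. Q (fst p) (snd p) b d a c)"
    using assms(2-5) by blast
  from continuous_on_compose2[OF this, of UNIV "\<lambda>p. (snd p, fst p)"] show ?thesis
    by (simp add: Qtilde_def continuous_on_Pair continuous_on_fst continuous_on_snd)
qed

lemma contr_prodker_tensor_fun:
  assumes i: "Suc i < n" and len: "length \<phi>s = n" "length gs = n" "length xs = n - 2" "length is = n - 2"
  shows "contr r i (prodker (tensor_fun \<phi>s) gs) xs is =
    prodker (\<lambda>ys is. (\<integral>x. (\<Sum>k<r. (\<phi>s ! i) (fst x) k * (gs ! i) (snd x) *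
                                   ((\<phi>s ! Suc i) (fst x) k * (gs ! Suc i) (snd x))) \<partial>lborel)
                     * tensor_fun (take i \<phi>s @ drop (Suc (Suc i)) \<phi>s) ys is)
      (take i gs @ drop (Suc (Suc i)) gs) xs is"
    (is "_ = prodker (\<lambda>ys is. ?c * _) _ xs is")
proof -
  define A B G H X X' J J' where "A = take i \<phi>s" "B = drop (Suc (Suc i)) \<phi>s"
    "G = take i gs" "H = drop (Suc (Suc i)) gs" "X = take i xs" "X' = drop i xs"
    "J = take i is" "J' = drop i is"
  have \<phi>s: "\<phi>s = A @ \<phi>s ! i # \<phi>s ! Suc i # B" and gs: "gs = G @ gs ! i # gs ! Suc i # H"
    unfolding A_B_G_H_X_X'_J_J'_def using i len by (metis Cons_nth_drop_Suc Suc_lessD append_take_drop_id)+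
  have lA: "length A = i" "length G = i" "length X = i" "length J = i"
    and lB: "length H = length B" "length X' = length B" "length J' = length B"
    using i len by (auto simp: A_B_G_H_X_X'_J_J'_def)
  have "prodker (tensor_fun \<phi>s) gs (X @ x # x # X') (J @ k # k # J') =
      tensor_ker A G X J * tensor_ker B H X' J' *
      ((\<phi>s ! i) (fst x) k * (gs ! i) (snd x) * ((\<phi>s ! Suc i) (fst x) k * (gs ! Suc i) (snd x)))" for x k
    using lA lB by (subst \<phi>s, subst gs, subst prodker_tensor_fun) (auto simp: tensor_ker_append)
  then have "contr r i (prodker (tensor_fun \<phi>s) gs) xs is = (\<integral>x. tensor_ker A G X J * tensor_ker B H X' J' *
      (\<Sum>k<r. (\<phi>s ! i) (fst x) k * (gs ! i) (snd x) * ((\<phi>s ! Suc i) (fst x) k * (gs ! Suc i) (snd x))) \<partial>lborel)"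
    unfolding contr_def A_B_G_H_X_X'_J_J'_def by (simp add: sum_distrib_left)
  also have "\<dots> = tensor_ker A G X J * tensor_ker B H X' J' * ?c"
    by (rule integral_mult_right_zero)
  also have "\<dots> = ?c * tensor_ker (A @ B) (G @ H) (X @ X') (J @ J')"
    using lA by (simp add: tensor_ker_append)
  also have "\<dots> = prodker (\<lambda>ys is. ?c * tensor_fun (A @ B) ys is) (G @ H) (X @ X') (J @ J')"
    by (subst prodker_scale, subst prodker_tensor_fun) (use lA lB in auto)
  finally show ?thesis unfolding A_B_G_H_X_X'_J_J'_def by simp
qed

section \<open>Reduction to normally ordered words\<close>

fun inversions :: "bool list \<Rightarrow> nat" where
  "inversions [] = 0"
| "inversions (b # s) = (if b then 0 else length (filter id s)) + inversions s"

lemma length_filter_lswap: "Suc i < length s \<Longrightarrow> length (filter P (lswap i s)) = length (filter P s)"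
proof -
  assume "Suc i < length s"
  then have "mset (lswap i s) = mset s" unfolding lswap_def by (intro mset_swap) auto
  then show ?thesis by (metis mset_filter size_mset)
qed

lemma inversions_lswap_less:
  "Suc i < length s \<Longrightarrow> \<not> s ! i \<Longrightarrow> s ! Suc i \<Longrightarrow> inversions (lswap i s) < inversions s"
proof (induction s arbitrary: i)
  case Nil
  then show ?case by simp
next
  case (Cons b s)
  show ?case
  proof (cases i)
    case 0
    with Cons.prems obtain u where "s = True # u" "\<not> b" by (cases s) auto
    with 0 show ?thesis by (simp add: lswap_def)
  next
    case (Suc j)
    then have "lswap i (b # s) = b # lswap j s" by (simp add: lswap_def)
    with Cons Suc show ?thesis by (simp add: length_filter_lswap)
  qed
qed

lemma no_inversion_imp_normal_ordered:
  "\<forall>i. Suc i < length s \<longrightarrow> s ! i \<or> \<not> s ! Suc i \<Longrightarrow> \<exists>m n. s = replicate m True @ replicate n False"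
proof (induction s)
  case Nil
  then show ?case by (intro exI[of _ 0]) simp
next
  case (Cons b s)
  have "\<forall>i. Suc i < length s \<longrightarrow> s ! i \<or> \<not> s ! Suc i"
  proof (intro allI impI)
    fix i assume "Suc i < length s"
    then show "s ! i \<or> \<not> s ! Suc i" using Cons.prems[rule_format, of "Suc i"] by simp
  qed
  then obtain m n where s: "s = replicate m True @ replicate n False" using Cons.IH by blast
  show ?case
  proof (cases b)
    case True
    then show ?thesis using s by (intro exI[of _ "Suc m"] exI[of _ n]) simp
  next
    case False
    have "m = 0"
    proof (rule ccontr)
      assume "m \<noteq> 0"
      then have "s ! 0" "0 < length s" using s by (auto simp: nth_append)
      then show False using Cons.prems[rule_format, of 0] False by simp
    qed
    then show ?thesis using s False by (intro exI[of _ 0] exI[of _ "Suc n"]) simp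
  qed
qed

lemma mcr_state_Aword:
  fixes \<tau> :: "('z::euclidean_space) mterm \<Rightarrow> complex"
  assumes st: "mcr_state r Q \<tau>" and len: "length \<phi>s = length s" "length gs = length s" "length \<psi>s = length s"
    and \<phi>s: "\<forall>\<phi>\<in>set \<phi>s. Cc1 r \<phi>" and gs: "\<forall>g\<in>set gs. L2 g"
    and agree: "\<forall>k<length s. \<forall>y j. j < r \<longrightarrow> (\<psi>s ! k) y j = (\<phi>s ! k) y j"
  shows "\<tau> (Aword s \<psi>s gs) = \<tau> (s, prodker (tensor_fun \<phi>s) gs)"
proof -
  have "prodker (tensor_fun \<phi>s) gs \<in> Fsp r (length s)"
    using Fsp_prodker[OF Cc_tensor_fun[OF \<phi>s]] len gs by simp
  then have "\<tau> (s, prodker (tensor_fun \<phi>s) gs) = \<tau> (s, snd (Aword s \<psi>s gs))"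
  proof (rule mcr_state_cong[OF st])
    fix xs :: "(real \<times> 'z) list" and "is"
    assume "length xs = length s" "mi r (length s) is"
    moreover from this have "length is = length s" by (simp add: mi_def)
    ultimately show "prodker (tensor_fun \<phi>s) gs xs is = snd (Aword s \<psi>s gs) xs is"
      using len agree by (simp add: prodker_tensor_fun snd_Aword tensor_ker_cong)
  qed
  moreover have "Aword s \<psi>s gs = (s, snd (Aword s \<psi>s gs))"
    using fst_Aword[OF len(3,2)] by (metis prod.collapse)
  ultimately show ?thesis by simp
qed

lemma exchange_tensor_term:
  fixes gs :: "('z::euclidean_space \<Rightarrow> complex) list"
  assumes QYB: "QYB r Q" and i: "Suc i < length s" "\<not> s ! i" "s ! Suc i"
    and \<phi>s: "length \<phi>s = length s" "\<forall>\<phi>\<in>set \<phi>s. Cc1 r \<phi>"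
    and gs: "length gs = length s" "\<forall>g\<in>set gs. L2 g"
  obtains E C where "E \<in> Fsp r (length s)" "C \<in> Fsp r (length s - 2)"
    "\<And>\<tau>. mcr_state r Q \<tau> \<Longrightarrow>
       \<tau> (s, prodker (tensor_fun \<phi>s) gs) = \<tau> (lswap i s, E) + \<tau> (take i s @ drop (Suc (Suc i)) s, C)"
proof -
  define M where "M = (\<lambda>a b. Qtilde Q b a)"
  define F where "F = prodker (tensor_fun \<phi>s) gs"
  define E where "E = prodker (exchange_fun r M i (tensor_fun \<phi>s)) (lswap i gs)"
  define c where "c = (\<integral>x. (\<Sum>k<r. (\<phi>s ! i) (fst x) k * (gs ! i) (snd x) *
                                  ((\<phi>s ! Suc i) (fst x) k * (gs ! Suc i) (snd x))) \<partial>(lborel :: (real \<times> 'z) measure))"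
  define C where "C = prodker (\<lambda>ys is. c * tensor_fun (take i \<phi>s @ drop (Suc (Suc i)) \<phi>s) ys is)
                               (take i gs @ drop (Suc (Suc i)) gs)"
  have F: "F \<in> Fsp r (length s)"
    using Fsp_prodker[OF Cc_tensor_fun[OF \<phi>s(2)]] \<phi>s(1) gs unfolding F_def by simp
  have "Cc r (length s) (exchange_fun r M i (tensor_fun \<phi>s))"
    using Cc_exchange_fun[OF Cc_tensor_fun[OF \<phi>s(2)] _ QYB_continuous_Qtilde[OF QYB]] i \<phi>s(1)
    unfolding M_def by simp
  then have E: "E \<in> Fsp r (length s)"
    unfolding E_def by (rule Fsp_prodker) (use gs set_lswap[OF i(1)[folded gs(1)]] in auto)
  have "\<forall>\<phi>\<in>set (take i \<phi>s @ drop (Suc (Suc i)) \<phi>s). Cc1 r \<phi>"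
    using \<phi>s(2) by (auto dest: in_set_takeD in_set_dropD)
  then have "Cc r (length s - 2) (\<lambda>ys is. c * tensor_fun (take i \<phi>s @ drop (Suc (Suc i)) \<phi>s) ys is)"
    using Cc_scale[OF Cc_tensor_fun] i(1) \<phi>s(1) by fastforce
  then have C: "C \<in> Fsp r (length s - 2)"
    unfolding C_def by (rule Fsp_prodker) (use i(1) gs in \<open>auto dest: in_set_takeD in_set_dropD\<close>)
  have split: "\<tau> (s, F) = \<tau> (lswap i s, E) + \<tau> (take i s @ drop (Suc (Suc i)) s, C)"
    if st: "mcr_state r Q \<tau>" for \<tau> :: "'z mterm \<Rightarrow> complex"
  proof -
    have "\<tau> (lswap i s, E) = \<tau> (lswap i s, Qker r M i F)"
      using E i(1) gs(1) by (intro mcr_state_cong[OF st]) (auto simp: E_def F_def Qker_prodker)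
    moreover have "\<tau> (take i s @ drop (Suc (Suc i)) s, C) = \<tau> (take i s @ drop (Suc (Suc i)) s, contr r i F)"
      using C i(1) \<phi>s(1) gs(1) unfolding C_def F_def c_def
      by (intro mcr_state_cong[OF st]) (auto simp: mi_def contr_prodker_tensor_fun)
    ultimately show ?thesis
      using mcr_state_exchange[OF st F i] unfolding M_def by simp
  qed
  show ?thesis by (rule that[OF E C split[unfolded F_def]])
qed

text \<open>The functionals \<open>S\<^bsup>(m,n)\<^esup>\<close> of part (i), restricted to real test functions: these already
  determine a state, which is what allows part (ii) to be reduced to part (i).\<close>

definition normal_moments_agree ::
  "nat \<Rightarrow> (('z::euclidean_space) mterm \<Rightarrow> complex) \<Rightarrow> ('z mterm \<Rightarrow> complex) \<Rightarrow> bool" where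
  "normal_moments_agree r \<tau>1 \<tau>2 \<longleftrightarrow>
     (\<forall>m n \<phi>s gs. 1 \<le> m + n \<longrightarrow> length \<phi>s = m + n \<longrightarrow> length gs = m + n \<longrightarrow>
        (\<forall>\<phi>\<in>set \<phi>s. Cc1_real r \<phi>) \<longrightarrow> (\<forall>g\<in>set gs. L2 g) \<longrightarrow>
        \<tau>1 (Aword (replicate m True @ replicate n False) \<phi>s gs)
      = \<tau>2 (Aword (replicate m True @ replicate n False) \<phi>s gs))"

lemma mcr_states_eq_on_tensor_word:
  fixes \<tau>1 \<tau>2 :: "('z::euclidean_space) mterm \<Rightarrow> complex"
  assumes QYB: "QYB r Q" and st1: "mcr_state r Q \<tau>1" and st2: "mcr_state r Q \<tau>2"
    and agree: "normal_moments_agree r \<tau>1 \<tau>2" and "s \<noteq> []"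
    and IH: "\<forall>t. (t, s) \<in> measures [length, inversions] \<longrightarrow> (\<forall>f\<in>Fsp r (length t). \<tau>1 (t, f) = \<tau>2 (t, f))"
    and \<phi>s: "length \<phi>s = length s" "\<forall>\<phi>\<in>set \<phi>s. Cc1_real r \<phi>"
    and gs: "length gs = length s" "\<forall>g\<in>set gs. L2 g"
  shows "\<tau>1 (s, prodker (tensor_fun \<phi>s) gs) = \<tau>2 (s, prodker (tensor_fun \<phi>s) gs)"
proof -
  have \<phi>s_Cc1: "\<forall>\<phi>\<in>set \<phi>s. Cc1 r \<phi>" using \<phi>s(2) by (simp add: Cc1_real_def)
  show ?thesis
  proof (cases "\<exists>i. Suc i < length s \<and> \<not> s ! i \<and> s ! Suc i")
    case True
    then obtain i where i: "Suc i < length s" "\<not> s ! i" "s ! Suc i" by blast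
    obtain E C where E: "E \<in> Fsp r (length s)" and C: "C \<in> Fsp r (length s - 2)"
      and split: "\<And>\<tau>. mcr_state r Q \<tau> \<Longrightarrow>
        \<tau> (s, prodker (tensor_fun \<phi>s) gs) = \<tau> (lswap i s, E) + \<tau> (take i s @ drop (Suc (Suc i)) s, C)"
      using exchange_tensor_term[OF QYB i \<phi>s(1) \<phi>s_Cc1 gs] by blast
    define s' where "s' = take i s @ drop (Suc (Suc i)) s"
    have "\<forall>f\<in>Fsp r (length s). \<tau>1 (lswap i s, f) = \<tau>2 (lswap i s, f)"
      using IH[rule_format, of "lswap i s"] inversions_lswap_less[OF i] by simp
    moreover have "length s' = length s - 2" "length s - 2 < length s"
      using i(1) unfolding s'_def by auto
    then have "\<forall>f\<in>Fsp r (length s - 2). \<tau>1 (s', f) = \<tau>2 (s', f)"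
      using IH[rule_format, of s'] by simp
    ultimately show ?thesis
      using split[OF st1, folded s'_def] split[OF st2, folded s'_def] E C by simp
  next
    case False
    then obtain m n where s: "s = replicate m True @ replicate n False"
      using no_inversion_imp_normal_ordered by blast
    have "1 \<le> m + n" using \<open>s \<noteq> []\<close> s by auto
    then have "\<tau>1 (Aword s \<phi>s gs) = \<tau>2 (Aword s \<phi>s gs)"
      using agree \<phi>s gs unfolding normal_moments_agree_def s by simp
    then show ?thesis
      using mcr_state_Aword[OF st1 \<phi>s(1) gs(1) \<phi>s(1) \<phi>s_Cc1 gs(2)]
        mcr_state_Aword[OF st2 \<phi>s(1) gs(1) \<phi>s(1) \<phi>s_Cc1 gs(2)] by simp
  qed
qed

lemma normal_moments_agree_imp_eq:
  fixes \<tau>1 \<tau>2 :: "('z::euclidean_space) mterm \<Rightarrow> complex"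
  assumes QYB: "QYB r Q"
    and st1: "mcr_state r Q \<tau>1" and ct1: "mcr_cont r \<tau>1"
    and st2: "mcr_state r Q \<tau>2" and ct2: "mcr_cont r \<tau>2"
    and agree: "normal_moments_agree r \<tau>1 \<tau>2" and a: "in_alg r a"
  shows "\<tau>1 a = \<tau>2 a"
proof -
  have "\<forall>f\<in>Fsp r (length s). \<tau>1 (s, f) = \<tau>2 (s, f)" for s
  proof (induction s rule: wf_induct[OF wf_measures[of "[length, inversions]"]])
    case (1 s)
    show ?case
    proof (cases "s = []")
      case True
      then show ?thesis using mcr_state_Nil[OF st1] mcr_state_Nil[OF st2] by simp
    next
      case False
      show ?thesis
        using mcr_states_eq_on_Fsp[OF st1 st2] mcr_states_eq_on_prodker[OF st1 st2 ct1 ct2]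
          mcr_states_eq_on_tensor_word[OF QYB st1 st2 agree False 1]
        by blast
    qed
  qed
  then show ?thesis using a unfolding in_alg_def by (metis prod.collapse)
qed

section \<open>Expanding the moments of \<open>B\<close>\<close>

fun sign_lists :: "nat \<Rightarrow> bool list list" where
  "sign_lists 0 = [[]]"
| "sign_lists (Suc n) = map (Cons True) (sign_lists n) @ map (Cons False) (sign_lists n)"

lemma length_sign_lists: "s \<in> set (sign_lists n) \<Longrightarrow> length s = n"
  by (induction n arbitrary: s) auto

definition map_at_minus :: "('a \<Rightarrow> 'a) \<Rightarrow> bool list \<Rightarrow> 'a list \<Rightarrow> 'a list" where
  "map_at_minus f s xs = map (\<lambda>(b, x). if b then x else f x) (zip s xs)"

lemma length_map_at_minus [simp]: "length (map_at_minus f s xs) = min (length s) (length xs)"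
  by (simp add: map_at_minus_def)

lemma map_at_minus_Cons [simp]:
  "map_at_minus f (b # s) (x # xs) = (if b then x else f x) # map_at_minus f s xs"
  by (simp add: map_at_minus_def)

lemma map_at_minus_involution:
  "(\<And>x. f (f x) = x) \<Longrightarrow> length xs = length s \<Longrightarrow> map_at_minus f s (map_at_minus f s xs) = xs"
  by (induction s arbitrary: xs) (auto simp: map_at_minus_def length_Suc_conv)

definition cnj_fun :: "('a \<Rightarrow> complex) \<Rightarrow> 'a \<Rightarrow> complex" where
  "cnj_fun g = (\<lambda>z. cnj (g z))"

definition cnj_test_fun :: "(real \<Rightarrow> nat \<Rightarrow> complex) \<Rightarrow> real \<Rightarrow> nat \<Rightarrow> complex" where
  "cnj_test_fun \<phi> = (\<lambda>y k. cnj (\<phi> y k))"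

definition scale_each :: "complex list \<Rightarrow> ('z \<Rightarrow> complex) list \<Rightarrow> ('z \<Rightarrow> complex) list" where
  "scale_each cs gs = map (\<lambda>(c, g) z. c * g z) (zip cs gs)"

lemma length_scale_each [simp]: "length (scale_each cs gs) = min (length cs) (length gs)"
  by (simp add: scale_each_def)

definition signed_Aword :: "bool list \<Rightarrow> (real \<Rightarrow> nat \<Rightarrow> complex) list \<Rightarrow> ('z \<Rightarrow> complex) list \<Rightarrow> 'z mterm" where
  "signed_Aword s \<phi>s gs = Aword s (map_at_minus cnj_test_fun s \<phi>s) (map_at_minus cnj_fun s gs)"

lemma Bword_eq_signed_Awords:
  "length gs = length \<phi>s \<Longrightarrow> Bword \<phi>s gs = map (\<lambda>s. signed_Aword s \<phi>s gs) (sign_lists (length \<phi>s))"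
proof (induction \<phi>s arbitrary: gs)
  case Nil
  then show ?case by (simp add: Bword_def signed_Aword_def Aword_def map_at_minus_def)
next
  case (Cons \<phi> \<phi>s)
  then obtain g gs' where gs: "gs = g # gs'" "length gs' = length \<phi>s" by (cases gs) auto
  have "(\<lambda>xs is. cnj (ker1 \<phi> g xs is)) = ker1 (cnj_test_fun \<phi>) (cnj_fun g)"
    by (auto simp: ker1_def cnj_test_fun_def cnj_fun_def)
  then show ?case
    using Cons.IH[OF gs(2)] unfolding gs
    by (simp add: Bword_def amul_def Bop_def signed_Aword_def Aword_Cons[symmetric] comp_def)
qed

lemma Aword_scale_each:
  "length \<psi>s = length s \<Longrightarrow> length hs = length s \<Longrightarrow> length ds = length s \<Longrightarrow>
   Aword s \<psi>s (scale_each ds hs) = (s, \<lambda>xs is. prod_list ds * snd (Aword s \<psi>s hs) xs is)"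
proof (induction s arbitrary: \<psi>s hs ds)
  case Nil
  then show ?case by (simp add: Aword_def scale_each_def one_term_def)
next
  case (Cons b s)
  then obtain \<psi> \<psi>s' h hs' d ds' where e: "\<psi>s = \<psi> # \<psi>s'" "hs = h # hs'" "ds = d # ds'"
    and l: "length \<psi>s' = length s" "length hs' = length s" "length ds' = length s"
    by (auto simp: length_Suc_conv)
  have "ker1 \<psi> (\<lambda>z. d * h z) xs is = d * ker1 \<psi> h xs is" for xs "is"
    by (simp add: ker1_def)
  then show ?case
    unfolding e using Cons.IH[OF l] l
    by (simp add: scale_each_def Aword_Cons tmul_def Aop_def fst_Aword mult_ac)
qed

lemma map_at_minus_scale_each:
  "length cs = length s \<Longrightarrow> length gs = length s \<Longrightarrow>
   map_at_minus cnj_fun s (scale_each cs gs) = scale_each (map_at_minus cnj s cs) (map_at_minus cnj_fun s gs)"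
  by (induction s arbitrary: cs gs) (auto simp: length_Suc_conv scale_each_def cnj_fun_def map_at_minus_def)

lemma L2_cnj_fun: "L2 g \<Longrightarrow> L2 (cnj_fun g)"
  unfolding L2_def cnj_fun_def by (auto intro: borel_measurable_continuous_on
      bounded_linear.continuous_on[OF bounded_linear_cnj continuous_on_id])

lemma L2_scale: "L2 g \<Longrightarrow> L2 (\<lambda>z. c * g z)"
  unfolding L2_def by (auto simp: norm_mult power_mult_distrib intro: integrable_mult_right)

lemma L2_map_at_minus_cnj_fun: "\<forall>g\<in>set gs. L2 g \<Longrightarrow> \<forall>g\<in>set (map_at_minus cnj_fun s gs). L2 g"
  unfolding map_at_minus_def by (auto dest!: set_zip_rightD intro!: L2_cnj_fun)

lemma L2_scale_each: "\<forall>g\<in>set gs. L2 g \<Longrightarrow> \<forall>g\<in>set (scale_each cs gs). L2 g"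
  unfolding scale_each_def by (auto dest!: set_zip_rightD intro!: L2_scale)

lemma map_at_minus_cnj_real:
  assumes "length \<phi>s = length s" "\<forall>\<phi>\<in>set \<phi>s. Cc1_real r \<phi>"
  shows "\<forall>k<length s. \<forall>y j. j < r \<longrightarrow> (map_at_minus cnj_test_fun s \<phi>s ! k) y j = (\<phi>s ! k) y j"
proof (intro allI impI)
  fix k y j assume "k < length s" "j < r"
  then have "Im ((\<phi>s ! k) y j) = 0" using assms unfolding Cc1_real_def by (metis nth_mem)
  then show "(map_at_minus cnj_test_fun s \<phi>s ! k) y j = (\<phi>s ! k) y j"
    using \<open>k < length s\<close> assms(1) by (auto simp: map_at_minus_def cnj_test_fun_def complex_eq_iff)
qed

lemma mcr_state_signed_Aword_scale_each:
  fixes \<tau> :: "('z::euclidean_space) mterm \<Rightarrow> complex"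
  assumes st: "mcr_state r Q \<tau>" and len: "length \<phi>s = length s" "length gs = length s" "length cs = length s"
    and \<phi>s: "\<forall>\<phi>\<in>set \<phi>s. Cc1_real r \<phi>" and gs: "\<forall>g\<in>set gs. L2 g"
  shows "\<tau> (signed_Aword s \<phi>s (scale_each cs gs)) = prod_list (map_at_minus cnj s cs) * \<tau> (signed_Aword s \<phi>s gs)"
proof -
  define w where "w = prod_list (map_at_minus cnj s cs)"
  define hs where "hs = map_at_minus cnj_fun s gs"
  have hs: "length hs = length s" "\<forall>g\<in>set hs. L2 g"
    using len gs L2_map_at_minus_cnj_fun unfolding hs_def by auto
  have \<phi>s_Cc1: "\<forall>\<phi>\<in>set \<phi>s. Cc1 r \<phi>" using \<phi>s by (simp add: Cc1_real_def)
  note signed = mcr_state_Aword[OF st len(1) hs(1) _ \<phi>s_Cc1 hs(2) map_at_minus_cnj_real[OF len(1) \<phi>s]]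
  have P: "prodker (tensor_fun \<phi>s) hs \<in> Fsp r (length s)"
    using Fsp_prodker[OF Cc_tensor_fun[OF \<phi>s_Cc1]] len(1) hs by simp
  have "signed_Aword s \<phi>s (scale_each cs gs)
      = (s, \<lambda>xs is. w * snd (Aword s (map_at_minus cnj_test_fun s \<phi>s) hs) xs is)"
    unfolding signed_Aword_def w_def hs_def using len
    by (simp add: map_at_minus_scale_each Aword_scale_each)
  also have "\<tau> \<dots> = \<tau> (s, \<lambda>xs is. w * prodker (tensor_fun \<phi>s) hs xs is)"
  proof (rule mcr_state_cong[OF st, symmetric])
    show "(\<lambda>xs is. w * prodker (tensor_fun \<phi>s) hs xs is) \<in> Fsp r (length s)"
      using Fsp_prodker[OF Cc_scale[OF Cc_tensor_fun[OF \<phi>s_Cc1]]] len(1) hs by (simp add: prodker_scale)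
    fix xs :: "(real \<times> 'z) list" and "is"
    assume xs: "length xs = length s" and "is": "mi r (length s) is"
    then have "length is = length s" by (simp add: mi_def)
    have "tensor_ker \<phi>s hs xs is = tensor_ker (map_at_minus cnj_test_fun s \<phi>s) hs xs is"
      by (rule tensor_ker_cong[symmetric]) (use len hs xs "is" map_at_minus_cnj_real[OF len(1) \<phi>s] in auto)
    then show "w * prodker (tensor_fun \<phi>s) hs xs is = w * snd (Aword s (map_at_minus cnj_test_fun s \<phi>s) hs) xs is"
      using len hs xs \<open>length is = length s\<close> by (simp add: prodker_tensor_fun snd_Aword)
  qed
  also have "\<dots> = w * \<tau> (signed_Aword s \<phi>s gs)"
    using mcr_state_scale[OF st P] signed len(1) by (simp add: signed_Aword_def hs_def)
  finally show ?thesis unfolding w_def .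
qed

text \<open>Polarization: \<open>c S\<^sub>+ + cnj c S\<^sub>- = 0\<close> for both \<open>c = 1\<close> and \<open>c = \<i>\<close> forces \<open>S\<^sub>+ = S\<^sub>- = 0\<close>.\<close>

lemma sign_polarization:
  assumes "\<And>cs. length cs = n \<Longrightarrow> set cs \<subseteq> {1, \<i>} \<Longrightarrow>
             (\<Sum>s\<leftarrow>sign_lists n. prod_list (map_at_minus cnj s cs) * F s) = 0"
    and "length s = n"
  shows "F s = 0"
  using assms
proof (induction n arbitrary: F s)
  case 0
  then show ?case using "0.prems"(1)[of "[]"] by (simp add: map_at_minus_def)
next
  case (Suc n F s)
  define S where "S b cs = (\<Sum>t\<leftarrow>sign_lists n. prod_list (map_at_minus cnj t cs) * F (b # t))" for b cs
  have split: "(\<Sum>s\<leftarrow>sign_lists (Suc n). prod_list (map_at_minus cnj s (c # cs)) * F s)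
      = c * S True cs + cnj c * S False cs" for c cs
    by (simp add: S_def comp_def sum_list_const_mult[symmetric] mult.assoc)
  have S: "S b cs = 0" if "length cs = n" "set cs \<subseteq> {1, \<i>}" for b cs
  proof -
    have "S True cs + S False cs = 0" "\<i> * (S True cs - S False cs) = 0"
      using Suc.prems(1)[of "1 # cs"] Suc.prems(1)[of "\<i> # cs"] that split[of 1 cs] split[of \<i> cs]
      by (simp_all add: algebra_simps)
    then show ?thesis by (cases b) auto
  qed
  obtain b t where "s = b # t" "length t = n" using Suc.prems(2) by (cases s) auto
  then show ?case using Suc.IH[of "\<lambda>t. F (b # t)" t] S unfolding S_def by blast
qed

lemma tauA_Bword_scale_each:
  fixes \<tau> :: "('z::euclidean_space) mterm \<Rightarrow> complex"
  assumes st: "mcr_state r Q \<tau>" and len: "length \<phi>s = n" "length gs = n" "length cs = n"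
    and \<phi>s: "\<forall>\<phi>\<in>set \<phi>s. Cc1_real r \<phi>" and gs: "\<forall>g\<in>set gs. L2 g"
  shows "tauA \<tau> (Bword \<phi>s (scale_each cs gs))
       = (\<Sum>s\<leftarrow>sign_lists n. prod_list (map_at_minus cnj s cs) * \<tau> (signed_Aword s \<phi>s gs))"
proof -
  have "tauA \<tau> (Bword \<phi>s (scale_each cs gs)) = (\<Sum>s\<leftarrow>sign_lists n. \<tau> (signed_Aword s \<phi>s (scale_each cs gs)))"
    using len by (simp add: Bword_eq_signed_Awords tauA_def comp_def)
  also have "\<dots> = (\<Sum>s\<leftarrow>sign_lists n. prod_list (map_at_minus cnj s cs) * \<tau> (signed_Aword s \<phi>s gs))"
    using len length_sign_lists
    by (intro arg_cong[where f = sum_list] map_cong refl mcr_state_signed_Aword_scale_each[OF st _ _ _ \<phi>s gs])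
      auto
  finally show ?thesis .
qed

lemma Bword_moments_imp_normal_moments_agree:
  fixes \<tau>1 \<tau>2 :: "('z::euclidean_space) mterm \<Rightarrow> complex"
  assumes st1: "mcr_state r Q \<tau>1" and st2: "mcr_state r Q \<tau>2"
    and B: "\<forall>n \<phi>s gs. 1 \<le> n \<longrightarrow> length \<phi>s = n \<longrightarrow> length gs = n \<longrightarrow>
              (\<forall>\<phi>\<in>set \<phi>s. Cc1_real r \<phi>) \<longrightarrow> (\<forall>g\<in>set gs. L2 g) \<longrightarrow>
              tauA \<tau>1 (Bword \<phi>s gs) = tauA \<tau>2 (Bword \<phi>s gs)"
  shows "normal_moments_agree r \<tau>1 \<tau>2"
  unfolding normal_moments_agree_def
proof (intro allI impI)
  fix m n \<phi>s and gs :: "('z \<Rightarrow> complex) list"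
  assume mn: "1 \<le> m + n" and len: "length \<phi>s = m + n" "length gs = m + n"
    and \<phi>s: "\<forall>\<phi>\<in>set \<phi>s. Cc1_real r \<phi>" and gs: "\<forall>g\<in>set gs. L2 g"
  define s where "s = replicate m True @ replicate n False"
  define gs0 where "gs0 = map_at_minus cnj_fun s gs"
  have gs0: "length gs0 = m + n" "\<forall>g\<in>set gs0. L2 g"
    using len gs L2_map_at_minus_cnj_fun unfolding gs0_def s_def by auto
  have "\<tau>1 (signed_Aword s \<phi>s gs0) - \<tau>2 (signed_Aword s \<phi>s gs0) = 0"
  proof (rule sign_polarization[where F = "\<lambda>s. \<tau>1 (signed_Aword s \<phi>s gs0) - \<tau>2 (signed_Aword s \<phi>s gs0)"])
    fix cs assume cs: "length cs = m + n" "set cs \<subseteq> {1, \<i>}"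
    have "tauA \<tau>1 (Bword \<phi>s (scale_each cs gs0)) = tauA \<tau>2 (Bword \<phi>s (scale_each cs gs0))"
      by (rule B[rule_format, OF mn]) (use len(1) cs(1) gs0 \<phi>s L2_scale_each[OF gs0(2)] in auto)
    then show "(\<Sum>s\<leftarrow>sign_lists (m + n). prod_list (map_at_minus cnj s cs) *
        (\<tau>1 (signed_Aword s \<phi>s gs0) - \<tau>2 (signed_Aword s \<phi>s gs0))) = 0"
      using tauA_Bword_scale_each[OF st1 len(1) gs0(1) cs(1) \<phi>s gs0(2)]
        tauA_Bword_scale_each[OF st2 len(1) gs0(1) cs(1) \<phi>s gs0(2)]
      by (simp add: right_diff_distrib sum_list_subtractf)
  qed (simp add: s_def)
  moreover have "signed_Aword s \<phi>s gs0 = Aword s (map_at_minus cnj_test_fun s \<phi>s) gs"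
    unfolding signed_Aword_def gs0_def using len
    by (simp add: map_at_minus_involution cnj_fun_def s_def)
  moreover have conj_invisible: "\<tau> (Aword s (map_at_minus cnj_test_fun s \<phi>s) gs) = \<tau> (Aword s \<phi>s gs)"
    if st: "mcr_state r Q \<tau>" for \<tau> :: "'z mterm \<Rightarrow> complex"
  proof -
    have l: "length \<phi>s = length s" "length gs = length s" using len by (simp_all add: s_def)
    have \<phi>s_Cc1: "\<forall>\<phi>\<in>set \<phi>s. Cc1 r \<phi>" using \<phi>s by (simp add: Cc1_real_def)
    show ?thesis
      using mcr_state_Aword[OF st l _ \<phi>s_Cc1 gs map_at_minus_cnj_real[OF l(1) \<phi>s]]
        mcr_state_Aword[OF st l l(1) \<phi>s_Cc1 gs] l by simp
  qed
  ultimately show "\<tau>1 (Aword s \<phi>s gs) = \<tau>2 (Aword s \<phi>s gs)"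
    using conj_invisible[OF st1] conj_invisible[OF st2] by simp
qed

theorem proposition3p1:
  fixes r :: nat and Q :: "real \<Rightarrow> real \<Rightarrow> op2"
    and \<tau>1 \<tau>2 :: "('z::euclidean_space) mterm \<Rightarrow> complex"
  assumes "QYB r Q"
    and "mcr_state r Q \<tau>1" and "mcr_cont r \<tau>1"
    and "mcr_state r Q \<tau>2" and "mcr_cont r \<tau>2"
  shows "((\<forall>m n \<phi>s gs. 1 \<le> m + n \<longrightarrow> length \<phi>s = m + n \<longrightarrow> length gs = m + n \<longrightarrow>
              (\<forall>\<phi>\<in>set \<phi>s. Cc1 r \<phi>) \<longrightarrow> (\<forall>g\<in>set gs. L2 g) \<longrightarrow>
              \<tau>1 (Aword (replicate m True @ replicate n False) \<phi>s gs)
            = \<tau>2 (Aword (replicate m True @ replicate n False) \<phi>s gs))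
          \<longrightarrow> (\<forall>a. in_alg r a \<longrightarrow> \<tau>1 a = \<tau>2 a))
       \<and> ((\<forall>n \<phi>s gs. 1 \<le> n \<longrightarrow> length \<phi>s = n \<longrightarrow> length gs = n \<longrightarrow>
              (\<forall>\<phi>\<in>set \<phi>s. Cc1_real r \<phi>) \<longrightarrow> (\<forall>g\<in>set gs. L2 g) \<longrightarrow>
              tauA \<tau>1 (Bword \<phi>s gs) = tauA \<tau>2 (Bword \<phi>s gs))
          \<longrightarrow> (\<forall>a. in_alg r a \<longrightarrow> \<tau>1 a = \<tau>2 a))"
proof (intro conjI impI allI)
  fix a :: "'z mterm"
  assume "\<forall>m n \<phi>s gs. 1 \<le> m + n \<longrightarrow> length \<phi>s = m + n \<longrightarrow> length gs = m + n \<longrightarrow>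
            (\<forall>\<phi>\<in>set \<phi>s. Cc1 r \<phi>) \<longrightarrow> (\<forall>g\<in>set gs. L2 g) \<longrightarrow>
            \<tau>1 (Aword (replicate m True @ replicate n False) \<phi>s gs)
          = \<tau>2 (Aword (replicate m True @ replicate n False) \<phi>s gs)"
  then have "normal_moments_agree r \<tau>1 \<tau>2"
    unfolding normal_moments_agree_def Cc1_real_def by blast
  then show "in_alg r a \<Longrightarrow> \<tau>1 a = \<tau>2 a"
    by (rule normal_moments_agree_imp_eq[OF assms])
next
  fix a :: "'z mterm"
  assume "\<forall>n \<phi>s gs. 1 \<le> n \<longrightarrow> length \<phi>s = n \<longrightarrow> length gs = n \<longrightarrow>
            (\<forall>\<phi>\<in>set \<phi>s. Cc1_real r \<phi>) \<longrightarrow> (\<forall>g\<in>set gs. L2 g) \<longrightarrow>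
            tauA \<tau>1 (Bword \<phi>s gs) = tauA \<tau>2 (Bword \<phi>s gs)"
  then have "normal_moments_agree r \<tau>1 \<tau>2"
    by (rule Bword_moments_imp_normal_moments_agree[OF assms(2,4)])
  then show "in_alg r a \<Longrightarrow> \<tau>1 a = \<tau>2 a"
    by (rule normal_moments_agree_imp_eq[OF assms])
qed

end
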